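(* The Banach algebra $\mathrm{Z}_{\mathbb{Z}_2}\mathrm{L}^1(\mathbb{T})=\{f\in\mathrm{L}^1(\mathbb{T}): f(s^{-1})=f(s)\text{ for a.e. }s\in\mathbb{T}\}$, a closed subalgebra of the convolution algebra $\mathrm{L}^1(\mathbb{T})$, is amenable.
   Context: $\mathbb{T}=\{s\in\mathbb{C}:|s|=1\}$ with normalised Haar measure; $\mathrm{L}^1(\mathbb{T})$ is its convolution algebra. A Banach algebra $\mathfrak{A}$ is amenable if it has a bounded approximate diagonal: a bounded net $(\mu_\alpha)$ in $\mathfrak{A}\hat\otimes\mathfrak{A}$ with $m(\mu_\alpha)a\to a$, $a\,m(\mu_\alpha)\to a$, $a\cdot\mu_\alpha-\mu_\alpha\cdot a\to0$ for all $a$ ($m$ multiplication, $a\cdot(b\otimes c)=ab\otimes c$, $(b\otimes c)\cdot a=b\otimes ca$). *)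

theory Defs
  imports "HOL-Analysis.Analysis"
begin

text \<open>Functions on the circle are modelled as functions complex to complex;
only their values on the unit circle matter (the measure lives there).\<close>

type_synonym cfun = "complex \<Rightarrow> complex"

definition haarT :: "complex measure" where
  "haarT = distr (restrict_space lborel {0..<1::real}) borel (\<lambda>t. cis (2 * pi * t))"

definition L1T :: "cfun set" where
  "L1T = {f. f \<in> borel_measurable borel \<and> integrable haarT f}"

definition L1norm :: "cfun \<Rightarrow> real" where
  "L1norm f = (\<integral>s. cmod (f s) \<partial>haarT)"

definition convT :: "cfun \<Rightarrow> cfun \<Rightarrow> cfun" where
  "convT f g = (\<lambda>s. \<integral>t. f (s * inverse t) * g t \<partial>haarT)"

definition ZL1T :: "cfun set" where
  "ZL1T = {f \<in> L1T. AE s in haarT. f (inverse s) = f s}"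

definition bilinear_on :: "cfun set \<Rightarrow> (cfun \<Rightarrow> cfun \<Rightarrow> complex) \<Rightarrow> bool" where
  "bilinear_on A \<phi> \<longleftrightarrow>
     (\<forall>a\<in>A. \<forall>a'\<in>A. \<forall>b\<in>A.
        \<phi> (\<lambda>x. a x + a' x) b = \<phi> a b + \<phi> a' b \<and>
        \<phi> b (\<lambda>x. a x + a' x) = \<phi> b a + \<phi> b a') \<and>
     (\<forall>a\<in>A. \<forall>b\<in>A. \<forall>c::complex.
        \<phi> (\<lambda>x. c * a x) b = c * \<phi> a b \<and> \<phi> a (\<lambda>x. c * b x) = c * \<phi> a b)"

text \<open>A finite list of pairs [(a_i,b_i)] represents the algebraic tensor
sum_i a_i (x) b_i in A (x) A; two lists represent the same tensor iff every
bilinear form on A takes the same value on them (universal property).\<close>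
definition tensor_eq :: "cfun set \<Rightarrow> (cfun \<times> cfun) list \<Rightarrow> (cfun \<times> cfun) list \<Rightarrow> bool" where
  "tensor_eq A xs ys \<longleftrightarrow>
     (\<forall>\<phi>. bilinear_on A \<phi> \<longrightarrow>
        (\<Sum>(a,b)\<leftarrow>xs. \<phi> a b) = (\<Sum>(a,b)\<leftarrow>ys. \<phi> a b))"

definition proj_norm :: "cfun set \<Rightarrow> (cfun \<Rightarrow> real) \<Rightarrow> (cfun \<times> cfun) list \<Rightarrow> real" where
  "proj_norm A nrm xs =
     Inf {(\<Sum>(a,b)\<leftarrow>ys. nrm a * nrm b) | ys. set ys \<subseteq> A \<times> A \<and> tensor_eq A xs ys}"

definition tensor_mult :: "(cfun \<Rightarrow> cfun \<Rightarrow> cfun) \<Rightarrow> (cfun \<times> cfun) list \<Rightarrow> cfun" where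
  "tensor_mult mul xs = (\<lambda>x. (\<Sum>(a,b)\<leftarrow>xs. mul a b x))"

text \<open>a.u - u.a  for  a.(b (x) c) = ab (x) c  and  (b (x) c).a = b (x) ca.\<close>
definition tensor_commutator :: "(cfun \<Rightarrow> cfun \<Rightarrow> cfun) \<Rightarrow> cfun \<Rightarrow> (cfun \<times> cfun) list \<Rightarrow> (cfun \<times> cfun) list" where
  "tensor_commutator mul a xs =
     map (\<lambda>(b,c). (mul a b, c)) xs @ map (\<lambda>(b,c). ((\<lambda>x. - b x), mul c a)) xs"

text \<open>Amenability: existence of a bounded approximate diagonal, in the
standard equivalent finite form (nets indexed by (finite set, epsilon); finite
tensors are dense in the projective tensor product).\<close>
definition amenable_on :: "cfun set \<Rightarrow> (cfun \<Rightarrow> real) \<Rightarrow> (cfun \<Rightarrow> cfun \<Rightarrow> cfun) \<Rightarrow> bool" where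
  "amenable_on A nrm mul \<longleftrightarrow>
     (\<exists>M::real. \<forall>F \<epsilon>. finite F \<and> F \<subseteq> A \<and> \<epsilon> > 0 \<longrightarrow>
        (\<exists>xs. set xs \<subseteq> A \<times> A \<and> proj_norm A nrm xs \<le> M \<and>
           (\<forall>a\<in>F. nrm (\<lambda>x. mul (tensor_mult mul xs) a x - a x) < \<epsilon> \<and>
                  nrm (\<lambda>x. mul a (tensor_mult mul xs) x - a x) < \<epsilon> \<and>
                  proj_norm A nrm (tensor_commutator mul a xs) < \<epsilon>)))"

end

theory Submission
  imports Defs "HOL-Probability.Probability_Measure"
begin

text \<open>Write \<open>c\<^sub>n(z) = z\<^sup>n + z\<^sup>-\<^sup>n\<close> (and \<open>c\<^sub>0 = 1\<close>) and \<open>\<kappa>\<^sub>N(n) = 1 - n/(N+1)\<close> for the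
  Fej\'er weights. An inversion-invariant \<open>a\<close> satisfies \<open>a * c\<^sub>n = c\<^sub>n * a = \<alpha>\<^sub>n c\<^sub>n\<close> with
  \<open>\<alpha>\<^sub>n\<close> its Fourier coefficient, so the tensors \<open>d\<^sub>N = \<Sum>\<^sub>n\<^sub>\<le>\<^sub>N \<kappa>\<^sub>N(n) c\<^sub>n \<otimes> c\<^sub>n\<close> commute
  exactly with every such \<open>a\<close>, and their products are the Fej\'er kernels \<open>F\<^sub>N\<close>, an approximate
  identity. To bound \<open>d\<^sub>N\<close> in the projective norm, sample at the \<open>M = 4N + 4\<close> angles
  \<open>\<theta>\<^sub>k = 2\<pi>k/M\<close>: discrete orthogonality of \<open>cos (n\<theta>\<^sub>k)\<close> gives
  \<open>d\<^sub>N + 1 \<otimes> 1 = \<Sum>\<^sub>k V\<^sub>k \<otimes> W\<^sub>k\<close>, where \<open>V\<^sub>k\<close> averages two rotates of \<open>F\<^sub>N\<close> (norm \<open>\<le> 1\<close>)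
  and \<open>W\<^sub>k\<close> is \<open>2/M\<close> times the same average of the de la Vall\'ee-Poussin kernel
  \<open>2F\<^sub>2\<^sub>N\<^sub>+\<^sub>1 - F\<^sub>N\<close> (norm \<open>\<le> 6/M\<close>). Hence \<open>\<parallel>d\<^sub>N\<parallel> \<le> 7\<close>.\<close>

section \<open>The normalised Haar measure of the circle\<close>

definition cis2pi :: "real \<Rightarrow> complex" where
  "cis2pi t = cis (2 * pi * t)"

lemma cis2pi_measurable[measurable]: "cis2pi \<in> borel_measurable borel"
  unfolding cis2pi_def by (intro borel_measurable_continuous_onI continuous_intros)

lemma cis2pi_add_1: "cis2pi (x + 1) = cis2pi x"
  unfolding cis2pi_def by (simp add: distrib_left cis_mult[symmetric])

lemma cis2pi_diff: "cis2pi x * inverse (cis2pi y) = cis2pi (x - y)"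
  unfolding cis2pi_def by (simp add: cis_mult right_diff_distrib)

lemma cis2pi_measurable_unit_interval[measurable]:
  "cis2pi \<in> measurable (restrict_space lborel {0..<1}) borel"
  by (rule measurable_restrict_space1) simp

lemma haarT_eq_distr_cis2pi: "haarT = distr (restrict_space lborel {0..<1}) borel cis2pi"
  unfolding haarT_def cis2pi_def by simp

lemma prob_space_haarT: "prob_space haarT"
  unfolding haarT_eq_distr_cis2pi
  by (intro prob_space.prob_space_distr prob_spaceI) (auto simp: emeasure_restrict_space)

interpretation haarT: prob_space haarT
  by (rule prob_space_haarT)

lemma space_haarT[simp]: "space haarT = UNIV"
  unfolding haarT_eq_distr_cis2pi by simp

lemma sets_haarT[simp, measurable_cong]: "sets haarT = sets borel"
  unfolding haarT_eq_distr_cis2pi by simp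

lemma sets_pair_haarT: "sets (haarT \<Otimes>\<^sub>M haarT) = sets (borel \<Otimes>\<^sub>M (borel :: complex measure))"
  by (rule sets_pair_measure_cong) auto

lemma AE_haarT_norm_eq_1: "AE t in haarT. cmod t = 1"
  unfolding haarT_eq_distr_cis2pi by (subst AE_distr_iff) (auto simp: cis2pi_def)

lemma AE_haarT_nonzero: "AE t in haarT. t \<noteq> 0"
  using AE_haarT_norm_eq_1 by eventually_elim auto

lemma integrable_haarT_bounded_on_circle:
  fixes f :: "complex \<Rightarrow> 'b::{banach,second_countable_topology}"
  assumes "f \<in> borel_measurable borel" "\<And>t. cmod t = 1 \<Longrightarrow> norm (f t) \<le> B"
  shows "integrable haarT f"
  using assms AE_haarT_norm_eq_1
  by (intro haarT.integrable_const_bound[where B=B]) (auto elim: eventually_mono)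

lemma periodic_shift_int:
  fixes h :: "real \<Rightarrow> 'a"
  assumes periodic: "\<And>x. h (x + 1) = h x"
  shows "h (x + of_int k) = h x"
proof -
  have shift_nat: "h (y + real n) = h y" for y n
  proof (induction n)
    case (Suc n)
    have "y + real (Suc n) = (y + real n) + 1" by simp
    then show ?case using Suc periodic by metis
  qed simp
  show ?thesis
  proof (cases "k \<ge> 0")
    case True
    then show ?thesis using shift_nat[of x "nat k"] by simp
  next
    case False
    then have "x + of_int k + real (nat (-k)) = x" by simp
    then show ?thesis using shift_nat[of "x + of_int k" "nat (-k)"] by simp
  qed
qed

text \<open>Cut the window at the integer \<open>k\<close> inside it and move both pieces into \<open>]0,1]\<close>.\<close>

lemma nn_integral_periodic_window:
  fixes h :: "real \<Rightarrow> ennreal"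
  assumes [measurable]: "h \<in> borel_measurable borel" and periodic: "\<And>x. h (x + 1) = h x"
  shows "(\<integral>\<^sup>+x. h x * indicator {\<beta><..\<beta>+1} x \<partial>lborel) = (\<integral>\<^sup>+x. h x * indicator {0<..1} x \<partial>lborel)"
proof -
  define k where "k = \<lfloor>\<beta>\<rfloor> + 1"
  define \<gamma> where "\<gamma> = \<beta> - of_int k + 1"
  have \<gamma>: "0 \<le> \<gamma>" "\<gamma> < 1" unfolding \<gamma>_def k_def by linarith+
  have shift: "(\<integral>\<^sup>+x. h x * indicator {a<..b} x \<partial>lborel) =
      (\<integral>\<^sup>+x. h x * indicator {a - of_int j<..b - of_int j} x \<partial>lborel)" for a b j
  proof -
    have "(\<integral>\<^sup>+x. h x * indicator {a<..b} x \<partial>lborel) =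
        (\<integral>\<^sup>+x. h (of_int j + x) * indicator {a<..b} (of_int j + x) \<partial>lborel)"
      using nn_integral_real_affine[of "\<lambda>x. h x * indicator {a<..b} x" 1 "of_int j"] by simp
    also have "\<dots> = (\<integral>\<^sup>+x. h x * indicator {a - of_int j<..b - of_int j} x \<partial>lborel)"
      using periodic_shift_int[of h, OF periodic]
      by (intro nn_integral_cong) (auto simp: add.commute indicator_def)
    finally show ?thesis .
  qed
  have "(\<integral>\<^sup>+x. h x * indicator {\<beta><..\<beta>+1} x \<partial>lborel) =
      (\<integral>\<^sup>+x. h x * indicator {\<beta><..of_int k} x + h x * indicator {of_int k<..\<beta>+1} x \<partial>lborel)"
    using \<gamma> unfolding \<gamma>_def by (intro nn_integral_cong) (auto simp: indicator_def)
  also have "\<dots> = (\<integral>\<^sup>+x. h x * indicator {\<beta><..of_int k} x \<partial>lborel) +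
      (\<integral>\<^sup>+x. h x * indicator {of_int k<..\<beta>+1} x \<partial>lborel)"
    by (simp add: nn_integral_add)
  also have "\<dots> = (\<integral>\<^sup>+x. h x * indicator {\<gamma><..1} x \<partial>lborel) + (\<integral>\<^sup>+x. h x * indicator {0<..\<gamma>} x \<partial>lborel)"
    using shift[of \<beta> "of_int k" "k - 1"] shift[of "of_int k" "\<beta> + 1" k]
    unfolding \<gamma>_def by (simp add: algebra_simps)
  also have "\<dots> = (\<integral>\<^sup>+x. h x * indicator {\<gamma><..1} x + h x * indicator {0<..\<gamma>} x \<partial>lborel)"
    by (simp add: nn_integral_add)
  also have "\<dots> = (\<integral>\<^sup>+x. h x * indicator {0<..1} x \<partial>lborel)"
    using \<gamma> by (intro nn_integral_cong) (auto simp: indicator_def)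
  finally show ?thesis .
qed

lemma nn_integral_periodic_reflect:
  fixes h :: "real \<Rightarrow> ennreal"
  assumes [measurable]: "h \<in> borel_measurable borel" and periodic: "\<And>x. h (x + 1) = h x"
  shows "(\<integral>\<^sup>+x. h (\<alpha> - x) * indicator {0..<1} x \<partial>lborel) = (\<integral>\<^sup>+x. h x * indicator {0..<1} x \<partial>lborel)"
proof -
  have "(\<integral>\<^sup>+x. h (\<alpha> - x) * indicator {0..<1} x \<partial>lborel) =
      (\<integral>\<^sup>+x. h (\<alpha> - x) * indicator {\<alpha>-1<..\<alpha>-1+1} (\<alpha> - x) \<partial>lborel)"
    by (intro nn_integral_cong) (auto simp: indicator_def)
  also have "\<dots> = (\<integral>\<^sup>+x. h x * indicator {\<alpha>-1<..\<alpha>-1+1} x \<partial>lborel)"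
    using nn_integral_real_affine[of "\<lambda>x. h x * indicator {\<alpha>-1<..\<alpha>-1+1} x" "-1" \<alpha>] by simp
  also have "\<dots> = (\<integral>\<^sup>+x. h x * indicator {0<..1} x \<partial>lborel)"
    by (rule nn_integral_periodic_window[OF assms])
  also have "\<dots> = (\<integral>\<^sup>+x. h x * indicator {0..<1} x \<partial>lborel)"
  proof (rule nn_integral_cong_AE)
    show "AE x in lborel. h x * indicator {0<..1} x = h x * indicator {0..<1} x"
      using AE_lborel_singleton[of 0] AE_lborel_singleton[of 1]
      by eventually_elim (auto simp: indicator_def)
  qed
  finally show ?thesis .
qed

lemma distr_haarT_reflect:
  assumes s: "cmod s = 1"
  shows "distr haarT borel (\<lambda>t. s * inverse t) = haarT"
proof -
  define \<alpha> where "\<alpha> = Arg s / (2 * pi)"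
  have "s \<noteq> 0" using s by auto
  then have "s = cis2pi \<alpha>"
    unfolding cis2pi_def \<alpha>_def using s by (simp add: cis_Arg sgn_eq)
  then have reflect: "s * inverse (cis2pi x) = cis2pi (\<alpha> - x)" for x
    by (simp add: cis2pi_diff)
  let ?I = "restrict_space lborel {0..<1::real}"
  have emeasure_distr: "emeasure (distr ?I borel f) A = (\<integral>\<^sup>+x. indicator A (f x) * indicator {0..<1} x \<partial>lborel)"
    if [measurable]: "f \<in> borel_measurable borel" "A \<in> sets borel" for f :: "real \<Rightarrow> complex" and A
  proof -
    have "f \<in> measurable ?I borel" by (rule measurable_restrict_space1) simp
    then show ?thesis
      by (simp add: emeasure_distr nn_integral_restrict_space nn_integral_indicator[symmetric]
          nn_integral_distr del: nn_integral_indicator)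
  qed
  have "distr haarT borel (\<lambda>t. s * inverse t) = distr ?I borel (\<lambda>x. cis2pi (\<alpha> - x))"
    unfolding haarT_eq_distr_cis2pi by (subst distr_distr) (auto simp: comp_def reflect)
  also have "\<dots> = distr ?I borel cis2pi"
  proof (rule measure_eqI)
    fix A assume "A \<in> sets (distr ?I borel (\<lambda>x. cis2pi (\<alpha> - x)))"
    then have [measurable]: "A \<in> sets borel" by simp
    show "emeasure (distr ?I borel (\<lambda>x. cis2pi (\<alpha> - x))) A = emeasure (distr ?I borel cis2pi) A"
      using nn_integral_periodic_reflect[of "\<lambda>y. indicator A (cis2pi y)" \<alpha>]
      by (simp add: emeasure_distr cis2pi_add_1)
  qed simp
  finally show ?thesis unfolding haarT_eq_distr_cis2pi .
qed

lemma distr_haarT_rotate: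
  assumes s: "cmod s = 1"
  shows "distr haarT borel (\<lambda>t. s * t) = haarT"
proof -
  have "distr haarT borel (\<lambda>t. s * t) = distr (distr haarT borel (\<lambda>t. 1 * inverse t)) borel (\<lambda>t. s * inverse t)"
    by (subst distr_distr) (auto simp: comp_def)
  also have "\<dots> = haarT"
    using distr_haarT_reflect[of 1] distr_haarT_reflect[OF s] by simp
  finally show ?thesis .
qed

lemma integral_haarT_reflect:
  fixes f :: "complex \<Rightarrow> 'b::{banach,second_countable_topology}"
  assumes "cmod s = 1" and [measurable]: "f \<in> borel_measurable borel"
  shows "(\<integral>t. f (s * inverse t) \<partial>haarT) = (\<integral>t. f t \<partial>haarT)"
  using integral_distr[of "\<lambda>t. s * inverse t" haarT borel f] distr_haarT_reflect[OF assms(1)] by simp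

lemma integrable_haarT_reflect:
  fixes f :: "complex \<Rightarrow> 'b::{banach,second_countable_topology}"
  assumes "cmod s = 1" and [measurable]: "f \<in> borel_measurable borel"
  shows "integrable haarT (\<lambda>t. f (s * inverse t)) \<longleftrightarrow> integrable haarT f"
  using integrable_distr_eq[of "\<lambda>t. s * inverse t" haarT borel f] distr_haarT_reflect[OF assms(1)] by simp

lemma integral_haarT_rotate:
  fixes f :: "complex \<Rightarrow> 'b::{banach,second_countable_topology}"
  assumes "cmod s = 1" and [measurable]: "f \<in> borel_measurable borel"
  shows "(\<integral>t. f (s * t) \<partial>haarT) = (\<integral>t. f t \<partial>haarT)"
  using integral_distr[of "\<lambda>t. s * t" haarT borel f] distr_haarT_rotate[OF assms(1)] by simp

lemma nn_integral_haarT_rotate: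
  assumes "cmod s = 1" and [measurable]: "f \<in> borel_measurable borel"
  shows "(\<integral>\<^sup>+t. f (s * t) \<partial>haarT) = (\<integral>\<^sup>+t. f t \<partial>haarT)"
  using nn_integral_distr[of "\<lambda>t. s * t" haarT borel f] distr_haarT_rotate[OF assms(1)] by simp

section \<open>The symmetric subalgebra and convolution\<close>

definition fun_subspace :: "cfun set \<Rightarrow> bool" where
  "fun_subspace A \<longleftrightarrow> (\<lambda>x. 0) \<in> A \<and> (\<forall>f\<in>A. \<forall>g\<in>A. (\<lambda>x. f x + g x) \<in> A) \<and>
     (\<forall>c. \<forall>f\<in>A. (\<lambda>x. c * f x) \<in> A)"

lemma fun_subspace_zero: "fun_subspace A \<Longrightarrow> (\<lambda>x. 0) \<in> A"
  unfolding fun_subspace_def by blast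

lemma fun_subspace_add: "fun_subspace A \<Longrightarrow> f \<in> A \<Longrightarrow> g \<in> A \<Longrightarrow> (\<lambda>x. f x + g x) \<in> A"
  unfolding fun_subspace_def by blast

lemma fun_subspace_cmult: "fun_subspace A \<Longrightarrow> f \<in> A \<Longrightarrow> (\<lambda>x. c * f x) \<in> A"
  unfolding fun_subspace_def by blast

lemma fun_subspace_uminus: "fun_subspace A \<Longrightarrow> f \<in> A \<Longrightarrow> (\<lambda>x. - f x) \<in> A"
  using fun_subspace_cmult[of A f "-1"] by simp

lemma fun_subspace_sum:
  assumes "fun_subspace A" "\<And>i. i \<in> I \<Longrightarrow> f i \<in> A"
  shows "(\<lambda>x. \<Sum>i\<in>I. c i * f i x) \<in> A"
  using assms(2)
proof (induction I rule: infinite_finite_induct)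
  case (insert i I)
  then show ?case
    using fun_subspace_add[OF assms(1) fun_subspace_cmult[OF assms(1), of "f i" "c i"]] by simp
qed (use fun_subspace_zero[OF assms(1)] in auto)

lemma ZL1TI:
  assumes "f \<in> borel_measurable borel" "integrable haarT f" "AE s in haarT. f (inverse s) = f s"
  shows "f \<in> ZL1T"
  using assms unfolding ZL1T_def L1T_def by auto

lemma ZL1TD:
  assumes "f \<in> ZL1T"
  shows "f \<in> borel_measurable borel" "integrable haarT f" "AE s in haarT. f (inverse s) = f s"
  using assms unfolding ZL1T_def L1T_def by auto

lemma fun_subspace_ZL1T: "fun_subspace ZL1T"
  unfolding fun_subspace_def
proof (intro conjI ballI allI)
  show "(\<lambda>x. 0) \<in> ZL1T" by (rule ZL1TI) auto
  fix f g assume f: "f \<in> ZL1T" and g: "g \<in> ZL1T"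
  have "AE s in haarT. f (inverse s) + g (inverse s) = f s + g s"
    using ZL1TD(3)[OF f] ZL1TD(3)[OF g] by eventually_elim simp
  then show "(\<lambda>x. f x + g x) \<in> ZL1T"
    using ZL1TD[OF f] ZL1TD[OF g] by (intro ZL1TI) auto
  fix c
  show "(\<lambda>x. c * f x) \<in> ZL1T"
    using ZL1TD[OF f] by (intro ZL1TI) (auto elim: eventually_mono)
qed

lemma ZL1T_const: "(\<lambda>x. c) \<in> ZL1T"
  by (rule ZL1TI) auto

lemma ZL1T_vanishing_on_circle:
  assumes "f \<in> borel_measurable borel" "\<And>x. cmod x = 1 \<Longrightarrow> f x = 0"
  shows "f \<in> ZL1T"
proof (rule ZL1TI)
  show "integrable haarT f"
    using assms by (intro integrable_haarT_bounded_on_circle[where B=0]) auto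
  show "AE s in haarT. f (inverse s) = f s"
    using AE_haarT_norm_eq_1 by eventually_elim (use assms in \<open>auto simp: norm_inverse\<close>)
qed fact

lemma L1norm_nonneg: "L1norm f \<ge> 0"
  unfolding L1norm_def by simp

lemma L1norm_const: "L1norm (\<lambda>x. c) = cmod c"
  unfolding L1norm_def using haarT.prob_space by simp

lemma L1norm_vanishing_on_circle:
  assumes [measurable]: "f \<in> borel_measurable borel" and "\<And>x. cmod x = 1 \<Longrightarrow> f x = 0"
  shows "L1norm f = 0"
proof -
  have "(\<integral>x. cmod (f x) \<partial>haarT) = (\<integral>x. 0 \<partial>haarT)"
    using AE_haarT_norm_eq_1 assms(2) by (intro integral_cong_AE) (auto elim: eventually_mono)
  then show ?thesis unfolding L1norm_def by simp
qed

lemma L1norm_cong_circle: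
  assumes [measurable]: "f \<in> borel_measurable borel" "g \<in> borel_measurable borel"
    and "\<And>x. cmod x = 1 \<Longrightarrow> f x = g x"
  shows "L1norm f = L1norm g"
  unfolding L1norm_def using AE_haarT_norm_eq_1 assms(3)
  by (intro integral_cong_AE) (auto elim: eventually_mono)

lemma convT_measurable[measurable]:
  assumes [measurable]: "f \<in> borel_measurable borel" "g \<in> borel_measurable borel"
  shows "convT f g \<in> borel_measurable borel"
proof -
  have "(\<lambda>(x, t). f (x * inverse t) * g t) \<in> borel_measurable (borel \<Otimes>\<^sub>M (borel :: complex measure))"
    by measurable
  then have "(\<lambda>(x, t). f (x * inverse t) * g t) \<in> borel_measurable (borel \<Otimes>\<^sub>M haarT)"
    by (subst measurable_cong_sets[OF sets_pair_measure_cong refl]) auto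
  then show ?thesis
    unfolding convT_def using haarT.borel_measurable_lebesgue_integral by simp
qed

lemma convT_cmult_left: "convT (\<lambda>x. c * f x) g x = c * convT f g x"
  unfolding convT_def by (simp add: mult.assoc)

text \<open>Convolution commutes only on the circle; elsewhere \<open>convT\<close> is junk.\<close>

lemma convT_commute:
  assumes x: "cmod x = 1" and [measurable]: "f \<in> borel_measurable borel" "g \<in> borel_measurable borel"
  shows "convT f g x = convT g f x"
proof -
  define h where "h t = g (x * inverse t) * f t" for t
  have [measurable]: "h \<in> borel_measurable borel" unfolding h_def by measurable
  have "x \<noteq> 0" using x by auto
  then have "t \<noteq> 0 \<Longrightarrow> h (x * inverse t) = f (x * inverse t) * g t" for t
    by (simp add: h_def field_simps)
  then have "convT f g x = (\<integral>t. h (x * inverse t) \<partial>haarT)"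
    unfolding convT_def using AE_haarT_nonzero by (intro integral_cong_AE) (auto elim!: eventually_mono)
  also have "\<dots> = (\<integral>t. h t \<partial>haarT)"
    by (rule integral_haarT_reflect[OF x]) simp
  also have "\<dots> = convT g f x"
    unfolding convT_def h_def ..
  finally show ?thesis .
qed

section \<open>Cosine characters and Fourier coefficients\<close>

lemma integral_haarT_power_inverse_power:
  "(\<integral>t. t^n * (inverse t)^m \<partial>haarT) = (if n = m then 1 else 0)"
proof (cases "n = m")
  case True
  have "(\<integral>t. t^n * (inverse t)^m \<partial>haarT) = (\<integral>t. 1 \<partial>haarT)"
    using AE_haarT_nonzero True
    by (intro integral_cong_AE) (auto elim: eventually_mono simp: power_mult_distrib[symmetric])
  then show ?thesis using True haarT.prob_space by simp
next
  case False
  define \<theta> where "\<theta> = pi / (real n - real m)"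
  define s where "s = cis \<theta>"
  have s: "cmod s = 1" unfolding s_def by simp
  have "s^n * (inverse s)^m = cis ((real n - real m) * \<theta>)"
    unfolding s_def cis_inverse Complex.DeMoivre cis_mult by (simp add: algebra_simps)
  then have rotation_factor: "s^n * (inverse s)^m = -1"
    using False unfolding \<theta>_def by simp
  let ?I = "\<integral>t. t^n * (inverse t)^m \<partial>haarT"
  have "?I = (\<integral>t. (s*t)^n * (inverse (s*t))^m \<partial>haarT)"
    by (rule integral_haarT_rotate[OF s, symmetric]) measurable
  also have "\<dots> = (\<integral>t. (s^n * (inverse s)^m) * (t^n * (inverse t)^m) \<partial>haarT)"
    by (simp add: power_mult_distrib mult_ac)
  also have "\<dots> = - ?I"
    by (simp add: rotation_factor)
  finally show ?thesis using False by simp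
qed

text \<open>The constant term is \<open>1\<close>, not \<open>2\<close>: then every \<open>cosine_char n\<close> is idempotent
  under convolution and \<open>cosine_char 0\<close> is the unit of the algebra.\<close>

definition cosine_char :: "nat \<Rightarrow> cfun" where
  "cosine_char n x = (if n = 0 then 1 else x^n + (inverse x)^n)"

definition fourier_coeff :: "cfun \<Rightarrow> nat \<Rightarrow> complex" where
  "fourier_coeff a n = (\<integral>t. a t * (inverse t)^n \<partial>haarT)"

lemma cosine_char_measurable[measurable]: "cosine_char n \<in> borel_measurable borel"
  unfolding cosine_char_def by measurable

lemma cosine_char_0[simp]: "cosine_char 0 x = 1"
  unfolding cosine_char_def by simp

lemma norm_cosine_char_le: "cmod t = 1 \<Longrightarrow> cmod (cosine_char n t) \<le> 2"
  unfolding cosine_char_def using norm_triangle_ineq[of "t^n" "(inverse t)^n"]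
  by (auto simp: norm_power norm_inverse)

lemma ZL1T_cosine_char: "cosine_char n \<in> ZL1T"
  by (rule ZL1TI) (auto intro!: integrable_haarT_bounded_on_circle norm_cosine_char_le simp: cosine_char_def)

lemma fourier_coeff_cosine_char: "fourier_coeff (cosine_char m) n = (if n = m then 1 else 0)"
proof (cases "m = 0")
  case True
  then show ?thesis
    unfolding fourier_coeff_def using integral_haarT_power_inverse_power[of 0 n] by simp
next
  case False
  have "fourier_coeff (cosine_char m) n = (\<integral>t. t^m * (inverse t)^n + t^0 * (inverse t)^(m+n) \<partial>haarT)"
    unfolding fourier_coeff_def cosine_char_def using False by (simp add: distrib_right power_add)
  also have "\<dots> = (\<integral>t. t^m * (inverse t)^n \<partial>haarT) + (\<integral>t. t^0 * (inverse t)^(m+n) \<partial>haarT)"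
    by (intro Bochner_Integration.integral_add integrable_haarT_bounded_on_circle[where B=1])
      (auto simp: norm_mult norm_power norm_inverse)
  finally show ?thesis
    using False by (simp only: integral_haarT_power_inverse_power) simp
qed

lemma integrable_mult_power:
  assumes "integrable haarT a" and [measurable]: "a \<in> borel_measurable borel"
  shows "integrable haarT (\<lambda>t. a t * (inverse t)^n)" "integrable haarT (\<lambda>t. a t * t^n)"
  using AE_haarT_norm_eq_1
  by (auto intro!: Bochner_Integration.integrable_bound[OF assms(1)] elim!: eventually_mono
      simp: norm_mult norm_power norm_inverse)

lemma fourier_coeff_symmetric:
  assumes a: "a \<in> ZL1T"
  shows "(\<integral>t. a t * t^n \<partial>haarT) = fourier_coeff a n"
proof -
  note [measurable] = ZL1TD(1)[OF a]
  have "(\<integral>t. a t * t^n \<partial>haarT) = (\<integral>t. a (1 * inverse t) * (1 * inverse t)^n \<partial>haarT)"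
    by (rule integral_haarT_reflect[symmetric]) auto
  also have "\<dots> = fourier_coeff a n"
    unfolding fourier_coeff_def using ZL1TD(3)[OF a]
    by (intro integral_cong_AE) (auto elim: eventually_mono)
  finally show ?thesis .
qed

lemma convT_cosine_char_left:
  assumes a: "a \<in> ZL1T" and "x \<noteq> 0"
  shows "convT (cosine_char n) a x = fourier_coeff a n * cosine_char n x"
proof (cases "n = 0")
  case True
  then show ?thesis unfolding convT_def fourier_coeff_def by simp
next
  case False
  note [measurable] = ZL1TD(1)[OF a]
  have "convT (cosine_char n) a x =
      (\<integral>t. x^n * (a t * (inverse t)^n) + (inverse x)^n * (a t * t^n) \<partial>haarT)"
    unfolding convT_def cosine_char_def using False
    by (intro Bochner_Integration.integral_cong) (auto simp: power_mult_distrib algebra_simps)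
  also have "\<dots> = x^n * fourier_coeff a n + (inverse x)^n * (\<integral>t. a t * t^n \<partial>haarT)"
    unfolding fourier_coeff_def using integrable_mult_power[OF ZL1TD(2,1)[OF a]] by simp
  also have "\<dots> = fourier_coeff a n * cosine_char n x"
    using fourier_coeff_symmetric[OF a] False by (simp add: cosine_char_def algebra_simps)
  finally show ?thesis .
qed

lemma convT_cosine_char_right:
  assumes a: "a \<in> ZL1T" and x: "cmod x = 1"
  shows "convT a (cosine_char n) x = fourier_coeff a n * cosine_char n x"
proof -
  have "x \<noteq> 0" using x by auto
  then show ?thesis
    using convT_commute[OF x ZL1TD(1)[OF a] cosine_char_measurable] convT_cosine_char_left[OF a]
    by simp
qed

section \<open>The Fej\'er kernel\<close>

definition fejer_coeff :: "nat \<Rightarrow> nat \<Rightarrow> complex" where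
  "fejer_coeff K n = (if n \<le> K then of_real (1 - real n / real (K + 1)) else 0)"

definition fejer_kernel :: "nat \<Rightarrow> cfun" where
  "fejer_kernel K x = (\<Sum>n\<le>K. fejer_coeff K n * cosine_char n x)"

lemma fejer_coeff_0[simp]: "fejer_coeff K 0 = 1"
  unfolding fejer_coeff_def by simp

lemma fejer_coeff_eq_0: "K < n \<Longrightarrow> fejer_coeff K n = 0"
  unfolding fejer_coeff_def by simp

lemma norm_fejer_coeff_le: "cmod (fejer_coeff K n) \<le> 1"
proof (cases "n \<le> K")
  case True
  then have "real n / real (K + 1) \<le> 1"
    by (simp add: divide_le_eq)
  then show ?thesis
    using True unfolding fejer_coeff_def by (simp only: if_True norm_of_real) simp
qed (simp add: fejer_coeff_def)

lemma of_nat_mult_fejer_coeff: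
  assumes "n \<le> K"
  shows "of_nat (K + 1) * fejer_coeff K n = of_nat (Suc K - n)"
proof -
  have "real (K + 1) * (1 - real n / real (K + 1)) = real (Suc K - n)"
    using assms by (simp add: field_simps of_nat_diff)
  then have "complex_of_real (real (K + 1) * (1 - real n / real (K + 1))) = of_nat (Suc K - n)"
    by simp
  then show ?thesis
    unfolding fejer_coeff_def using assms by simp
qed

lemma fejer_kernel_measurable[measurable]: "fejer_kernel K \<in> borel_measurable borel"
  unfolding fejer_kernel_def by measurable

lemma ZL1T_fejer_kernel: "fejer_kernel K \<in> ZL1T"
  unfolding fejer_kernel_def by (intro fun_subspace_sum fun_subspace_ZL1T ZL1T_cosine_char)

lemma integrable_fejer_kernel: "integrable haarT (fejer_kernel K)"
  by (rule ZL1TD(2)[OF ZL1T_fejer_kernel])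

lemma sum_power_mult_power:
  fixes x y :: "'a::comm_ring_1"
  assumes "x * y = 1"
  shows "(\<Sum>i<n. x^i * y^n) = (\<Sum>k<n. y^Suc k)"
proof (induction n)
  case (Suc n)
  have "(\<Sum>i<Suc n. x^i * y^Suc n) = y * (\<Sum>i<n. x^i * y^n) + (x * y)^n * y"
    by (simp add: sum_distrib_left mult_ac power_mult_distrib)
  also have "\<dots> = (\<Sum>k<Suc n. y^Suc k)"
    using Suc assms by (subst sum.lessThan_Suc_shift) (simp add: sum_distrib_left)
  finally show ?case .
qed simp

lemma sum_powers_mult_sum_inverse_powers:
  fixes x :: complex
  assumes "x \<noteq> 0"
  shows "(\<Sum>i<n. x^i) * (\<Sum>j<n. (inverse x)^j) = (\<Sum>k<n. of_nat (n - k) * cosine_char k x)"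
proof (induction n)
  case (Suc n)
  let ?y = "inverse x"
  have xy: "x * ?y = 1" "?y * x = 1" using assms by auto
  have "(\<Sum>i<Suc n. x^i) * (\<Sum>j<Suc n. ?y^j) =
      (\<Sum>i<n. x^i) * (\<Sum>j<n. ?y^j) + (\<Sum>i<n. x^i * ?y^n) + (\<Sum>j<n. ?y^j * x^n) + (x * ?y)^n"
    by (simp add: algebra_simps sum_distrib_left sum_distrib_right power_mult_distrib)
  also have "\<dots> = (\<Sum>k<n. of_nat (n - k) * cosine_char k x) + ((\<Sum>k<n. ?y^Suc k) + (\<Sum>k<n. x^Suc k) + 1)"
    using Suc sum_power_mult_power[OF xy(1), of n] sum_power_mult_power[OF xy(2), of n] xy by simp
  also have "(\<Sum>k<n. ?y^Suc k) + (\<Sum>k<n. x^Suc k) + 1 = (\<Sum>k<Suc n. cosine_char k x)"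
    by (subst sum.lessThan_Suc_shift) (simp add: cosine_char_def sum.distrib)
  also have "(\<Sum>k<n. of_nat (n - k) * cosine_char k x) + (\<Sum>k<Suc n. cosine_char k x) =
      (\<Sum>k<Suc n. of_nat (Suc n - k) * cosine_char k x)"
    by (simp add: sum.distrib[symmetric] Suc_diff_le algebra_simps)
  finally show ?case .
qed simp

lemma fejer_kernel_eq_norm_square:
  assumes x: "cmod x = 1"
  shows "fejer_kernel K x = of_real ((cmod (\<Sum>i<Suc K. x^i))^2 / real (K + 1))"
proof -
  have "x \<noteq> 0" using x by auto
  have "inverse x = cnj x"
    using x by (simp add: inverse_eq_divide complex_div_cnj[of 1 x])
  then have "of_real ((cmod (\<Sum>i<Suc K. x^i))^2) = (\<Sum>i<Suc K. x^i) * (\<Sum>j<Suc K. (inverse x)^j)"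
    by (simp only: complex_norm_square cnj_sum complex_cnj_power)
  also have "\<dots> = (\<Sum>k<Suc K. of_nat (Suc K - k) * cosine_char k x)"
    by (rule sum_powers_mult_sum_inverse_powers[OF \<open>x \<noteq> 0\<close>])
  also have "\<dots> = of_nat (K + 1) * fejer_kernel K x"
    unfolding fejer_kernel_def sum_distrib_left lessThan_Suc_atMost[symmetric]
  proof (intro sum.cong refl)
    fix k assume "k \<in> {..<Suc K}"
    then have "of_nat (K + 1) * fejer_coeff K k = of_nat (Suc K - k)"
      by (intro of_nat_mult_fejer_coeff) simp
    then show "of_nat (Suc K - k) * cosine_char k x = of_nat (K + 1) * (fejer_coeff K k * cosine_char k x)"
      by (metis mult.assoc)
  qed
  finally have "of_nat (K + 1) * fejer_kernel K x = of_real ((cmod (\<Sum>i<Suc K. x^i))^2)" ..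
  moreover have "(of_nat (K + 1) :: complex) \<noteq> 0"
    by (simp only: of_nat_eq_0_iff)
  ultimately have "fejer_kernel K x = of_real ((cmod (\<Sum>i<Suc K. x^i))^2) / of_nat (K + 1)"
    by (metis nonzero_mult_div_cancel_left)
  then show ?thesis
    by simp
qed

lemma Re_fejer_kernel_nonneg: "cmod x = 1 \<Longrightarrow> Re (fejer_kernel K x) \<ge> 0"
  by (simp only: fejer_kernel_eq_norm_square Re_complex_of_real) simp

lemma norm_fejer_kernel_eq_Re: "cmod x = 1 \<Longrightarrow> cmod (fejer_kernel K x) = Re (fejer_kernel K x)"
  by (simp only: fejer_kernel_eq_norm_square Re_complex_of_real norm_of_real) simp

lemma Re_fejer_kernel_le_away_from_1:
  assumes x: "cmod x = 1" and "x \<noteq> 1"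
  shows "Re (fejer_kernel K x) \<le> 4 / (real (K + 1) * (cmod (1 - x))^2)"
proof -
  have pos: "cmod (1 - x) > 0" using \<open>x \<noteq> 1\<close> by auto
  have "cmod (1 - x) * cmod (\<Sum>i<Suc K. x^i) = cmod (1 - x^Suc K)"
    by (metis norm_mult one_diff_power_eq)
  also have "\<dots> \<le> 2"
    using norm_triangle_ineq4[of 1 "x^Suc K"] x by (simp add: norm_power norm_mult)
  finally have "cmod (\<Sum>i<Suc K. x^i) \<le> 2 / cmod (1 - x)"
    using pos by (simp add: field_simps)
  then have "(cmod (\<Sum>i<Suc K. x^i))^2 \<le> (2 / cmod (1 - x))^2"
    by (intro power_mono) auto
  have "Re (fejer_kernel K x) = (cmod (\<Sum>i<Suc K. x^i))^2 / real (K + 1)"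
    by (simp only: fejer_kernel_eq_norm_square[OF x] Re_complex_of_real)
  also have "\<dots> \<le> (2 / cmod (1 - x))^2 / real (K + 1)"
    using \<open>(cmod (\<Sum>i<Suc K. x^i))^2 \<le> (2 / cmod (1 - x))^2\<close> by (rule divide_right_mono) simp
  also have "\<dots> = 4 / (real (K + 1) * (cmod (1 - x))^2)"
    using pos by (simp add: field_simps)
  finally show ?thesis .
qed

lemma norm_fejer_kernel_le: "cmod x = 1 \<Longrightarrow> cmod (fejer_kernel K x) \<le> 2 * real (K + 1)"
proof -
  assume x: "cmod x = 1"
  have "cmod (fejer_kernel K x) \<le> (\<Sum>n\<le>K. cmod (fejer_coeff K n) * cmod (cosine_char n x))"
    unfolding fejer_kernel_def norm_mult[symmetric] by (rule norm_sum)
  also have "\<dots> \<le> (\<Sum>n\<le>K. 1 * 2)"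
    by (intro sum_mono mult_mono norm_fejer_coeff_le norm_cosine_char_le[OF x]) auto
  finally show ?thesis by simp
qed

lemma integral_fejer_kernel: "(\<integral>t. fejer_kernel K t \<partial>haarT) = 1"
proof -
  have "(\<integral>t. fejer_kernel K t \<partial>haarT) = (\<Sum>n\<le>K. fejer_coeff K n * fourier_coeff (cosine_char n) 0)"
    unfolding fejer_kernel_def fourier_coeff_def
    by (simp add: ZL1TD(2)[OF ZL1T_cosine_char])
  also have "\<dots> = 1"
    by (simp add: fourier_coeff_cosine_char if_distrib[of "\<lambda>c. _ * c"] cong: if_cong)
  finally show ?thesis .
qed

lemma nn_integral_Re_fejer_kernel: "(\<integral>\<^sup>+t. ennreal (Re (fejer_kernel K t)) \<partial>haarT) = 1"
proof -
  have "(\<integral>\<^sup>+t. ennreal (Re (fejer_kernel K t)) \<partial>haarT) = ennreal (\<integral>t. Re (fejer_kernel K t) \<partial>haarT)"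
    using AE_haarT_norm_eq_1
    by (intro nn_integral_eq_integral) (auto elim!: eventually_mono intro: integrable_fejer_kernel Re_fejer_kernel_nonneg)
  then show ?thesis
    using integral_fejer_kernel[of K] integrable_fejer_kernel[of K] by simp
qed

lemma integral_norm_fejer_kernel_rotate:
  assumes s: "cmod s = 1"
  shows "integrable haarT (\<lambda>x. cmod (fejer_kernel K (s * x)))"
    and "(\<integral>x. cmod (fejer_kernel K (s * x)) \<partial>haarT) = 1"
proof -
  show "integrable haarT (\<lambda>x. cmod (fejer_kernel K (s * x)))"
    using s norm_fejer_kernel_le[of "s * _" K]
    by (intro integrable_haarT_bounded_on_circle[where B="2 * real (K + 1)"]) (auto simp: norm_mult)
  have "(\<integral>x. cmod (fejer_kernel K (s * x)) \<partial>haarT) = (\<integral>x. cmod (fejer_kernel K x) \<partial>haarT)"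
    by (rule integral_haarT_rotate[OF s]) simp
  also have "\<dots> = (\<integral>x. Re (fejer_kernel K x) \<partial>haarT)"
    using AE_haarT_norm_eq_1 by (intro integral_cong_AE) (auto elim!: eventually_mono simp: norm_fejer_kernel_eq_Re)
  also have "\<dots> = 1"
    using integral_fejer_kernel[of K] integrable_fejer_kernel[of K] by simp
  finally show "(\<integral>x. cmod (fejer_kernel K (s * x)) \<partial>haarT) = 1" .
qed

section \<open>Continuity of translation in \<open>L\<^sup>1\<close>\<close>

definition dist1 :: "cfun \<Rightarrow> cfun \<Rightarrow> ennreal" where
  "dist1 f g = (\<integral>\<^sup>+x. ennreal (cmod (f x - g x)) \<partial>haarT)"

lemma dist1_commute: "dist1 f g = dist1 g f"
  unfolding dist1_def by (simp add: norm_minus_commute)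

lemma dist1_add_le:
  assumes [measurable]: "f \<in> borel_measurable borel" "g \<in> borel_measurable borel"
    "h \<in> borel_measurable borel" "k \<in> borel_measurable borel"
  shows "dist1 (\<lambda>x. f x + h x) (\<lambda>x. g x + k x) \<le> dist1 f g + dist1 h k"
proof -
  have "dist1 (\<lambda>x. f x + h x) (\<lambda>x. g x + k x) \<le>
      (\<integral>\<^sup>+x. ennreal (cmod (f x - g x)) + ennreal (cmod (h x - k x)) \<partial>haarT)"
    unfolding dist1_def
  proof (intro nn_integral_mono)
    fix x
    have "cmod (f x + h x - (g x + k x)) \<le> cmod (f x - g x) + cmod (h x - k x)"
      using norm_triangle_ineq[of "f x - g x" "h x - k x"] by (simp add: algebra_simps)
    then show "ennreal (cmod (f x + h x - (g x + k x))) \<le> ennreal (cmod (f x - g x)) + ennreal (cmod (h x - k x))"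
      by (simp flip: ennreal_plus)
  qed
  also have "\<dots> = dist1 f g + dist1 h k"
    unfolding dist1_def by (rule nn_integral_add) auto
  finally show ?thesis .
qed

lemma dist1_triangle:
  assumes "f \<in> borel_measurable borel" "g \<in> borel_measurable borel" "h \<in> borel_measurable borel"
  shows "dist1 f h \<le> dist1 f g + dist1 g h"
  using dist1_add_le[of f g g h] assms by (simp add: dist1_def)

lemma dist1_cmult:
  assumes [measurable]: "f \<in> borel_measurable borel" "g \<in> borel_measurable borel"
  shows "dist1 (\<lambda>x. c * f x) (\<lambda>x. c * g x) = ennreal (cmod c) * dist1 f g"
  unfolding dist1_def
  by (simp add: nn_integral_cmult ennreal_mult norm_mult flip: right_diff_distrib)

definition approx_by_continuous :: "cfun \<Rightarrow> bool" where
  "approx_by_continuous a \<longleftrightarrow> (\<forall>\<eta>>0. \<exists>g. continuous_on UNIV g \<and> dist1 a g < ennreal \<eta>)"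

lemma approx_by_continuous_closed:
  assumes [measurable]: "a \<in> borel_measurable borel"
    and approx: "\<And>\<eta>. \<eta> > 0 \<Longrightarrow> \<exists>h. h \<in> borel_measurable borel \<and> approx_by_continuous h \<and> dist1 a h < ennreal \<eta>"
  shows "approx_by_continuous a"
  unfolding approx_by_continuous_def
proof (intro allI impI)
  fix \<eta> :: real assume "\<eta> > 0"
  then obtain h where [measurable]: "h \<in> borel_measurable borel"
    and h: "approx_by_continuous h" "dist1 a h < ennreal (\<eta>/2)"
    using approx[of "\<eta>/2"] by auto
  obtain g where g: "continuous_on UNIV g" "dist1 h g < ennreal (\<eta>/2)"
    using h(1) \<open>\<eta> > 0\<close> unfolding approx_by_continuous_def by (meson half_gt_zero)
  note [measurable] = borel_measurable_continuous_onI[OF g(1)]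
  have "dist1 a g \<le> dist1 a h + dist1 h g"
    by (rule dist1_triangle) auto
  also have "\<dots> < ennreal (\<eta>/2) + ennreal (\<eta>/2)"
    by (rule add_strict_mono[OF h(2) g(2)])
  also have "\<dots> = ennreal \<eta>"
    using \<open>\<eta> > 0\<close> by (simp flip: ennreal_plus)
  finally show "\<exists>g. continuous_on UNIV g \<and> dist1 a g < ennreal \<eta>"
    using g(1) by blast
qed

lemma approx_by_continuous_add:
  assumes "approx_by_continuous f" "approx_by_continuous h"
    and [measurable]: "f \<in> borel_measurable borel" "h \<in> borel_measurable borel"
  shows "approx_by_continuous (\<lambda>x. f x + h x)"
  unfolding approx_by_continuous_def
proof (intro allI impI)
  fix \<eta> :: real assume "\<eta> > 0"
  obtain g1 where g1: "continuous_on UNIV g1" "dist1 f g1 < ennreal (\<eta>/2)"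
    using assms(1) \<open>\<eta> > 0\<close> unfolding approx_by_continuous_def by (meson half_gt_zero)
  obtain g2 where g2: "continuous_on UNIV g2" "dist1 h g2 < ennreal (\<eta>/2)"
    using assms(2) \<open>\<eta> > 0\<close> unfolding approx_by_continuous_def by (meson half_gt_zero)
  note [measurable] = borel_measurable_continuous_onI[OF g1(1)] borel_measurable_continuous_onI[OF g2(1)]
  have "dist1 (\<lambda>x. f x + h x) (\<lambda>x. g1 x + g2 x) \<le> dist1 f g1 + dist1 h g2"
    by (rule dist1_add_le) auto
  also have "\<dots> < ennreal (\<eta>/2) + ennreal (\<eta>/2)"
    by (rule add_strict_mono[OF g1(2) g2(2)])
  also have "\<dots> = ennreal \<eta>"
    using \<open>\<eta> > 0\<close> by (simp flip: ennreal_plus)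
  finally show "\<exists>g. continuous_on UNIV g \<and> dist1 (\<lambda>x. f x + h x) g < ennreal \<eta>"
    using g1(1) g2(1) by (intro exI[of _ "\<lambda>x. g1 x + g2 x"]) (auto intro: continuous_intros)
qed

lemma approx_by_continuous_cmult:
  assumes "approx_by_continuous f" and [measurable]: "f \<in> borel_measurable borel"
  shows "approx_by_continuous (\<lambda>x. c * f x)"
  unfolding approx_by_continuous_def
proof (intro allI impI)
  fix \<eta> :: real assume "\<eta> > 0"
  obtain g where g: "continuous_on UNIV g" "dist1 f g < ennreal (\<eta> / (cmod c + 1))"
    using assms(1) \<open>\<eta> > 0\<close> unfolding approx_by_continuous_def
    by (metis add_nonneg_pos divide_pos_pos norm_ge_zero zero_less_one)
  note [measurable] = borel_measurable_continuous_onI[OF g(1)]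
  have "dist1 (\<lambda>x. c * f x) (\<lambda>x. c * g x) = ennreal (cmod c) * dist1 f g"
    by (rule dist1_cmult) auto
  also have "\<dots> \<le> ennreal (cmod c) * ennreal (\<eta> / (cmod c + 1))"
    using g(2) by (intro mult_left_mono) auto
  also have "\<dots> = ennreal (cmod c * (\<eta> / (cmod c + 1)))"
    using \<open>\<eta> > 0\<close> by (intro ennreal_mult[symmetric]) auto
  also have "\<dots> < ennreal \<eta>"
  proof (intro ennreal_lessI)
    have "cmod c * (\<eta> / (cmod c + 1)) = \<eta> * (cmod c / (cmod c + 1))"
      by simp
    also have "\<dots> < \<eta> * 1"
    proof (intro mult_strict_left_mono)
      have "cmod c + 1 > 0" by (smt (verit) norm_ge_zero)
      then show "cmod c / (cmod c + 1) < 1" by (simp add: pos_divide_less_eq)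
    qed fact
    finally show "cmod c * (\<eta> / (cmod c + 1)) < \<eta>"
      by simp
  qed (use \<open>\<eta> > 0\<close> in auto)
  finally show "\<exists>g. continuous_on UNIV g \<and> dist1 (\<lambda>x. c * f x) g < ennreal \<eta>"
    using g(1) by (intro exI[of _ "\<lambda>x. c * g x"]) (auto intro: continuous_intros)
qed

lemma approx_by_continuous_limit:
  assumes [measurable]: "f \<in> borel_measurable borel" "\<And>i. u i \<in> borel_measurable borel"
    and approx: "\<And>i. approx_by_continuous (u i)" and lim: "\<And>x. (\<lambda>i. u i x) \<longlonglongrightarrow> f x"
    and bound: "\<And>i x. norm (u i x) \<le> 2 * norm (f x)" and "integrable haarT f"
  shows "approx_by_continuous f"
proof (rule approx_by_continuous_closed)
  fix \<eta> :: real assume "\<eta> > 0"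
  have "(\<lambda>i. dist1 f (u i)) \<longlonglongrightarrow> 0"
    unfolding dist1_def
  proof (rule nn_integral_dominated_convergence_norm[where w="\<lambda>x. 2 * norm (f x)"])
    show "(\<integral>\<^sup>+x. ennreal (2 * norm (f x)) \<partial>haarT) < \<infinity>"
      using \<open>integrable haarT f\<close> unfolding integrable_iff_bounded
      by (simp add: ennreal_mult nn_integral_cmult ennreal_mult_less_top)
  qed (auto simp: bound lim)
  then have "eventually (\<lambda>i. dist1 f (u i) < ennreal \<eta>) sequentially"
    using \<open>\<eta> > 0\<close> by (intro order_tendstoD(2)) auto
  then obtain i where "dist1 f (u i) < ennreal \<eta>"
    by (auto simp: eventually_sequentially)
  then show "\<exists>h. h \<in> borel_measurable borel \<and> approx_by_continuous h \<and> dist1 f h < ennreal \<eta>"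
    using approx assms(2) by blast
qed fact

lemma tendsto_max_infdist_indicator:
  assumes "closed K" "K \<noteq> {}"
  shows "(\<lambda>j. max 0 (1 - real j * infdist x K)) \<longlonglongrightarrow> indicator K x"
proof (cases "x \<in> K")
  case False
  then have "infdist x K > 0"
    using assms by (intro infdist_pos_not_in_closed) auto
  then obtain N :: nat where N: "real N * infdist x K \<ge> 1"
    using reals_Archimedean3 by (meson less_imp_le)
  have "max 0 (1 - real j * infdist x K) = 0" if "N \<le> j" for j
  proof -
    have "real N * infdist x K \<le> real j * infdist x K"
      using that by (intro mult_right_mono) (auto simp: infdist_nonneg)
    then show ?thesis using N by simp
  qed
  then show ?thesis
    using False by (auto intro: tendsto_eventually eventually_sequentiallyI)
qed simp

lemma approx_by_continuous_indicator_compact: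
  assumes "compact K"
  shows "approx_by_continuous (\<lambda>x. of_real (indicator K x))"
  unfolding approx_by_continuous_def
proof (intro allI impI)
  fix \<eta> :: real assume "\<eta> > 0"
  define u where "u j x = (of_real (if K = {} then 0 else max 0 (1 - real j * infdist x K)) :: complex)"
    for j :: nat and x :: complex
  have u_cont: "continuous_on UNIV (u j)" for j
    unfolding u_def by (cases "K = {}") (auto intro!: continuous_intros)
  note [measurable] = borel_measurable_continuous_onI[OF u_cont] borel_compact[OF assms]
  have u_bounded: "norm (u j x) \<le> 1" for j x
    unfolding u_def by (auto simp: infdist_nonneg)
  have u_lim: "(\<lambda>j. u j x) \<longlonglongrightarrow> of_real (indicator K x)" for x
    unfolding u_def using tendsto_max_infdist_indicator[OF compact_imp_closed[OF assms], of x]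
    by (cases "K = {}") (auto intro: tendsto_of_real)
  have "(\<lambda>j. dist1 (\<lambda>x. of_real (indicator K x)) (u j)) \<longlonglongrightarrow> 0"
    unfolding dist1_def
    using haarT.emeasure_space_1
    by (intro nn_integral_dominated_convergence_norm[where w="\<lambda>x. 1"]) (auto simp: u_lim u_bounded)
  then have "eventually (\<lambda>j. dist1 (\<lambda>x. of_real (indicator K x)) (u j) < ennreal \<eta>) sequentially"
    using \<open>\<eta> > 0\<close> by (intro order_tendstoD(2)) auto
  then obtain j where "dist1 (\<lambda>x. of_real (indicator K x)) (u j) < ennreal \<eta>"
    by (auto simp: eventually_sequentially)
  then show "\<exists>g. continuous_on UNIV g \<and> dist1 (\<lambda>x. of_real (indicator K x)) g < ennreal \<eta>"
    using u_cont by blast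
qed

lemma approx_by_continuous_indicator:
  assumes [measurable]: "A \<in> sets borel"
  shows "approx_by_continuous (\<lambda>x. indicator A x *\<^sub>R c)"
proof -
  have "approx_by_continuous (\<lambda>x. of_real (indicator A x))"
  proof (rule approx_by_continuous_closed)
    fix \<eta> :: real assume "\<eta> > 0"
    have sup: "emeasure haarT A = (SUP K \<in> {K. K \<subseteq> A \<and> compact K}. emeasure haarT K)"
      by (rule inner_regular) auto
    have nonempty: "{K. K \<subseteq> A \<and> compact K} \<noteq> {}"
      by blast
    obtain K where K: "K \<subseteq> A" "compact K" "emeasure haarT A < emeasure haarT K + ennreal \<eta>"
      using SUP_approx_ennreal[OF \<open>\<eta> > 0\<close> nonempty sup] haarT.emeasure_finite[of A] by auto
    note [measurable] = borel_compact[OF K(2)]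
    have "emeasure haarT A = emeasure haarT K + emeasure haarT (A - K)"
      using K(1) by (subst plus_emeasure) (auto simp: Un_absorb1)
    then have "emeasure haarT (A - K) < ennreal \<eta>"
      using K(3) by (simp add: ennreal_add_left_cancel_less)
    moreover have "dist1 (\<lambda>x. of_real (indicator A x)) (\<lambda>x. of_real (indicator K x)) =
        (\<integral>\<^sup>+x. indicator (A - K) x \<partial>haarT)"
      unfolding dist1_def using K(1) by (intro nn_integral_cong) (auto simp: indicator_def)
    then have "dist1 (\<lambda>x. of_real (indicator A x)) (\<lambda>x. of_real (indicator K x)) = emeasure haarT (A - K)"
      by simp
    ultimately show "\<exists>h. h \<in> borel_measurable borel \<and> approx_by_continuous h \<and>
        dist1 (\<lambda>x. of_real (indicator A x)) h < ennreal \<eta>"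
      using approx_by_continuous_indicator_compact[OF K(2)]
      by (intro exI[of _ "\<lambda>x. of_real (indicator K x)"]) simp
  qed measurable
  then show ?thesis
    using approx_by_continuous_cmult[of "\<lambda>x. of_real (indicator A x)" c]
    by (simp add: scaleR_conv_of_real mult.commute)
qed

lemma integrable_imp_approx_by_continuous:
  assumes "integrable haarT a"
  shows "approx_by_continuous a"
  using assms
proof (induction rule: integrable_induct)
  case (base A c)
  then show ?case by (intro approx_by_continuous_indicator) simp
next
  case (add f g)
  then show ?case by (intro approx_by_continuous_add) auto
next
  case (lim f s)
  then show ?case by (intro approx_by_continuous_limit[of f s]) auto
qed

lemma dist1_le_uniform_on_circle:
  assumes "\<And>x. cmod x = 1 \<Longrightarrow> cmod (f x - g x) \<le> e"
  shows "dist1 f g \<le> ennreal e"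
proof -
  have "dist1 f g \<le> (\<integral>\<^sup>+x. ennreal e \<partial>haarT)"
    unfolding dist1_def using AE_haarT_norm_eq_1 assms
    by (intro nn_integral_mono_AE) (auto elim!: eventually_mono intro: ennreal_leI)
  then show ?thesis
    using haarT.emeasure_space_1 by simp
qed

lemma L1_translation_continuous:
  assumes "integrable haarT a" "\<eta> > 0"
  obtains \<delta> where "\<delta> > 0" "\<And>s. cmod s = 1 \<Longrightarrow> cmod (1 - s) < \<delta> \<Longrightarrow> dist1 (\<lambda>x. a (s * x)) a \<le> ennreal \<eta>"
proof -
  have [measurable]: "a \<in> borel_measurable borel"
    using borel_measurable_integrable[OF assms(1)] by simp
  obtain g where g: "continuous_on UNIV g" "dist1 a g < ennreal (\<eta>/3)"
    using integrable_imp_approx_by_continuous[OF assms(1)] \<open>\<eta> > 0\<close>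
    unfolding approx_by_continuous_def by (meson divide_pos_pos zero_less_numeral)
  note [measurable] = borel_measurable_continuous_onI[OF g(1)]
  have "uniformly_continuous_on (sphere 0 1) g"
    by (rule compact_uniformly_continuous) (auto intro: continuous_on_subset[OF g(1)])
  then obtain \<delta> where "\<delta> > 0"
    and \<delta>: "\<And>x x'. x \<in> sphere 0 1 \<Longrightarrow> x' \<in> sphere 0 1 \<Longrightarrow> dist x' x < \<delta> \<Longrightarrow> dist (g x') (g x) < \<eta>/3"
    unfolding uniformly_continuous_on_def using \<open>\<eta> > 0\<close> by (metis divide_pos_pos zero_less_numeral)
  have "dist1 (\<lambda>x. a (s * x)) a \<le> ennreal \<eta>" if s: "cmod s = 1" "cmod (1 - s) < \<delta>" for s
  proof -
    have "dist1 (\<lambda>x. a (s * x)) (\<lambda>x. g (s * x)) = dist1 a g"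
      unfolding dist1_def by (rule nn_integral_haarT_rotate[OF s(1)]) simp
    moreover have "dist1 (\<lambda>x. g (s * x)) g \<le> ennreal (\<eta>/3)"
    proof (rule dist1_le_uniform_on_circle)
      fix x :: complex assume x: "cmod x = 1"
      have "dist (s * x) x = cmod x * cmod (s - 1)"
        by (simp add: dist_norm norm_mult[symmetric] algebra_simps)
      also have "\<dots> < \<delta>"
        using x s by (simp add: norm_minus_commute)
      finally have "dist (g (s * x)) (g x) < \<eta>/3"
        using x s by (intro \<delta>) (auto simp: norm_mult)
      then show "cmod (g (s * x) - g x) \<le> \<eta>/3"
        by (simp add: dist_norm)
    qed
    moreover have "dist1 (\<lambda>x. a (s * x)) a \<le>
        dist1 (\<lambda>x. a (s * x)) (\<lambda>x. g (s * x)) + (dist1 (\<lambda>x. g (s * x)) g + dist1 g a)"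
      using dist1_triangle[of "\<lambda>x. a (s * x)" "\<lambda>x. g (s * x)" a] dist1_triangle[of "\<lambda>x. g (s * x)" g a]
      by (auto intro: order_trans add_left_mono)
    ultimately have "dist1 (\<lambda>x. a (s * x)) a \<le> ennreal (\<eta>/3) + (ennreal (\<eta>/3) + ennreal (\<eta>/3))"
      using g(2) dist1_commute[of g a]
      by (smt (verit) add_mono add_left_mono less_imp_le order_trans)
    also have "\<dots> = ennreal \<eta>"
      using \<open>\<eta> > 0\<close> by (simp flip: ennreal_plus)
    finally show ?thesis .
  qed
  with \<open>\<delta> > 0\<close> show ?thesis using that by blast
qed

section \<open>The Fej\'er kernel is an approximate identity\<close>

lemma integrable_mult_fejer_kernel:
  assumes "integrable haarT f" "f \<in> borel_measurable borel"
  shows "integrable haarT (\<lambda>t. f t * fejer_kernel K t)"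
proof (rule Bochner_Integration.integrable_bound[OF integrable_scaleR_right[OF assms(1), of "2 * real (K + 1)"]])
  show "AE t in haarT. norm (f t * fejer_kernel K t) \<le> norm ((2 * real (K + 1)) *\<^sub>R f t)"
    using AE_haarT_norm_eq_1
  proof eventually_elim
    fix t :: complex assume "cmod t = 1"
    then have "cmod (f t) * cmod (fejer_kernel K t) \<le> cmod (f t) * (2 * real (K + 1))"
      by (intro mult_left_mono norm_fejer_kernel_le) auto
    then show "norm (f t * fejer_kernel K t) \<le> norm ((2 * real (K + 1)) *\<^sub>R f t)"
      by (simp add: norm_mult mult.commute)
  qed
qed (use assms(2) in simp)

lemma norm_convT_fejer_kernel_diff_le:
  assumes a: "a \<in> ZL1T" and x: "cmod x = 1"
  shows "ennreal (cmod (convT (fejer_kernel K) a x - a x)) \<le>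
    (\<integral>\<^sup>+t. ennreal (Re (fejer_kernel K t)) * ennreal (cmod (a (x * inverse t) - a x)) \<partial>haarT)"
proof -
  note [measurable] = ZL1TD(1)[OF a]
  have "integrable haarT (\<lambda>t. a (x * inverse t))"
    using integrable_haarT_reflect[OF x, of a] ZL1TD(2)[OF a] by simp
  then have int1: "integrable haarT (\<lambda>t. a (x * inverse t) * fejer_kernel K t)"
    by (rule integrable_mult_fejer_kernel) simp
  have int2: "integrable haarT (\<lambda>t. fejer_kernel K t * a x)"
    using integrable_fejer_kernel by simp
  have "convT (fejer_kernel K) a x - a x =
      (\<integral>t. a (x * inverse t) * fejer_kernel K t - fejer_kernel K t * a x \<partial>haarT)"
    using convT_commute[OF x fejer_kernel_measurable, of a] int1 int2 integral_fejer_kernel[of K]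
    unfolding convT_def by simp
  then have "ennreal (cmod (convT (fejer_kernel K) a x - a x)) \<le>
      (\<integral>\<^sup>+t. ennreal (norm (a (x * inverse t) * fejer_kernel K t - fejer_kernel K t * a x)) \<partial>haarT)"
    using integral_norm_bound_ennreal[OF Bochner_Integration.integrable_diff[OF int1 int2]] by simp
  also have "\<dots> = (\<integral>\<^sup>+t. ennreal (Re (fejer_kernel K t)) * ennreal (cmod (a (x * inverse t) - a x)) \<partial>haarT)"
  proof (rule nn_integral_cong_AE)
    show "AE t in haarT. ennreal (norm (a (x * inverse t) * fejer_kernel K t - fejer_kernel K t * a x)) =
        ennreal (Re (fejer_kernel K t)) * ennreal (cmod (a (x * inverse t) - a x))"
      using AE_haarT_norm_eq_1
    proof eventually_elim
      fix t :: complex assume t: "cmod t = 1"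
      have "a (x * inverse t) * fejer_kernel K t - fejer_kernel K t * a x =
          fejer_kernel K t * (a (x * inverse t) - a x)"
        by (simp add: algebra_simps)
      then have "norm (a (x * inverse t) * fejer_kernel K t - fejer_kernel K t * a x) =
          Re (fejer_kernel K t) * cmod (a (x * inverse t) - a x)"
        by (simp only: norm_mult norm_fejer_kernel_eq_Re[OF t])
      then show "ennreal (norm (a (x * inverse t) * fejer_kernel K t - fejer_kernel K t * a x)) =
          ennreal (Re (fejer_kernel K t)) * ennreal (cmod (a (x * inverse t) - a x))"
        using Re_fejer_kernel_nonneg[OF t] by (simp add: ennreal_mult)
    qed
  qed
  finally show ?thesis .
qed

lemma L1norm_diff_eq_dist1:
  assumes "f \<in> borel_measurable borel" "g \<in> borel_measurable borel"
  shows "L1norm (\<lambda>x. f x - g x) = enn2real (dist1 f g)"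
  unfolding L1norm_def dist1_def using assms by (intro integral_eq_nn_integral) auto

lemma dist1_rotate_le:
  assumes s: "cmod s = 1" and "integrable haarT a"
  shows "dist1 (\<lambda>x. a (s * x)) a \<le> 2 * ennreal (L1norm a)"
proof -
  have [measurable]: "a \<in> borel_measurable borel"
    using borel_measurable_integrable[OF assms(2)] by simp
  have norm_a: "(\<integral>\<^sup>+x. ennreal (cmod (a x)) \<partial>haarT) = ennreal (L1norm a)"
    unfolding L1norm_def using assms(2) by (intro nn_integral_eq_integral) auto
  have "dist1 (\<lambda>x. a (s * x)) a \<le> (\<integral>\<^sup>+x. ennreal (cmod (a (s * x))) + ennreal (cmod (a x)) \<partial>haarT)"
    unfolding dist1_def by (intro nn_integral_mono) (simp add: norm_triangle_ineq4 flip: ennreal_plus)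
  also have "\<dots> = (\<integral>\<^sup>+x. ennreal (cmod (a (s * x))) \<partial>haarT) + (\<integral>\<^sup>+x. ennreal (cmod (a x)) \<partial>haarT)"
    by (rule nn_integral_add) auto
  also have "(\<integral>\<^sup>+x. ennreal (cmod (a (s * x))) \<partial>haarT) = (\<integral>\<^sup>+x. ennreal (cmod (a x)) \<partial>haarT)"
    by (rule nn_integral_haarT_rotate[OF s]) simp
  finally show ?thesis
    unfolding norm_a by (simp add: mult_2)
qed

lemma dist1_convT_fejer_kernel_le_average:
  assumes a: "a \<in> ZL1T"
  shows "dist1 (convT (fejer_kernel K) a) a \<le>
    (\<integral>\<^sup>+t. ennreal (Re (fejer_kernel K t)) * dist1 (\<lambda>x. a (inverse t * x)) a \<partial>haarT)"
proof -
  note [measurable] = ZL1TD(1)[OF a]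
  define G where "G x t = ennreal (Re (fejer_kernel K t)) * ennreal (cmod (a (x * inverse t) - a x))" for x t
  have "(\<lambda>(x, t). G x t) \<in> borel_measurable (borel \<Otimes>\<^sub>M (borel :: complex measure))"
    unfolding G_def by measurable
  then have G_measurable: "(\<lambda>(x, t). G x t) \<in> borel_measurable (haarT \<Otimes>\<^sub>M haarT)"
    by (subst measurable_cong_sets[OF sets_pair_haarT refl])
  interpret pair_sigma_finite haarT haarT
    by (intro pair_sigma_finite.intro haarT.sigma_finite_measure_axioms)
  have "dist1 (convT (fejer_kernel K) a) a \<le> (\<integral>\<^sup>+x. (\<integral>\<^sup>+t. G x t \<partial>haarT) \<partial>haarT)"
    unfolding dist1_def G_def using AE_haarT_norm_eq_1
    by (intro nn_integral_mono_AE) (auto elim!: eventually_mono intro: norm_convT_fejer_kernel_diff_le[OF a])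
  also have "\<dots> = (\<integral>\<^sup>+t. (\<integral>\<^sup>+x. G x t \<partial>haarT) \<partial>haarT)"
    using Fubini'[OF G_measurable] by simp
  also have "\<dots> = (\<integral>\<^sup>+t. ennreal (Re (fejer_kernel K t)) *
      (\<integral>\<^sup>+x. ennreal (cmod (a (x * inverse t) - a x)) \<partial>haarT) \<partial>haarT)"
    unfolding G_def by (intro nn_integral_cong nn_integral_cmult) measurable
  finally show ?thesis
    unfolding dist1_def by (simp add: mult.commute)
qed

text \<open>Near \<open>1\<close> use continuity of translation, away from \<open>1\<close> the uniform smallness of the
  Fej\'er kernel.\<close>

lemma Re_fejer_kernel_mult_dist1_le:
  assumes "integrable haarT a" "\<delta> > 0" and t: "cmod t = 1"
    and translation: "\<And>s. cmod s = 1 \<Longrightarrow> cmod (1 - s) < \<delta> \<Longrightarrow> dist1 (\<lambda>x. a (s * x)) a \<le> ennreal \<eta>"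
  shows "ennreal (Re (fejer_kernel K t)) * dist1 (\<lambda>x. a (inverse t * x)) a \<le>
    ennreal \<eta> * ennreal (Re (fejer_kernel K t)) + ennreal (4 / (real (K + 1) * \<delta>^2)) * (2 * ennreal (L1norm a))"
proof (cases "cmod (1 - t) < \<delta>")
  case True
  have "t \<noteq> 0" using t by auto
  then have "1 - inverse t = (t - 1) * inverse t" by (simp add: field_simps)
  then have "cmod (1 - inverse t) = cmod (1 - t)"
    using t by (simp add: norm_mult norm_inverse norm_minus_commute)
  then have "dist1 (\<lambda>x. a (inverse t * x)) a \<le> ennreal \<eta>"
    using True t by (intro translation) (auto simp: norm_inverse)
  then have "ennreal (Re (fejer_kernel K t)) * dist1 (\<lambda>x. a (inverse t * x)) a \<le> ennreal (Re (fejer_kernel K t)) * ennreal \<eta>"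
    by (rule mult_left_mono) simp
  then show ?thesis by (simp add: mult.commute add_increasing2)
next
  case False
  then have "t \<noteq> 1" using \<open>\<delta> > 0\<close> by auto
  have "Re (fejer_kernel K t) \<le> 4 / (real (K + 1) * (cmod (1 - t))^2)"
    by (rule Re_fejer_kernel_le_away_from_1[OF t \<open>t \<noteq> 1\<close>])
  also have "\<dots> \<le> 4 / (real (K + 1) * \<delta>^2)"
    using False \<open>\<delta> > 0\<close> by (intro divide_left_mono mult_left_mono power_mono mult_pos_pos) auto
  finally have "ennreal (Re (fejer_kernel K t)) \<le> ennreal (4 / (real (K + 1) * \<delta>^2))"
    by (rule ennreal_leI)
  moreover have "dist1 (\<lambda>x. a (inverse t * x)) a \<le> 2 * ennreal (L1norm a)"
    using t assms(1) by (intro dist1_rotate_le) (simp_all add: norm_inverse)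
  ultimately have "ennreal (Re (fejer_kernel K t)) * dist1 (\<lambda>x. a (inverse t * x)) a \<le>
      ennreal (4 / (real (K + 1) * \<delta>^2)) * (2 * ennreal (L1norm a))"
    by (rule mult_mono) auto
  then show ?thesis by (simp add: add_increasing)
qed

lemma dist1_convT_fejer_kernel_le:
  assumes a: "a \<in> ZL1T" and "\<delta> > 0" "\<eta> \<ge> 0"
    and translation: "\<And>s. cmod s = 1 \<Longrightarrow> cmod (1 - s) < \<delta> \<Longrightarrow> dist1 (\<lambda>x. a (s * x)) a \<le> ennreal \<eta>"
  shows "dist1 (convT (fejer_kernel K) a) a \<le> ennreal (\<eta> + 8 * L1norm a / (real (K + 1) * \<delta>^2))"
proof -
  define C where "C = 4 / (real (K + 1) * \<delta>^2)"
  have "C \<ge> 0"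
    unfolding C_def by simp
  have "dist1 (convT (fejer_kernel K) a) a \<le>
      (\<integral>\<^sup>+t. ennreal (Re (fejer_kernel K t)) * dist1 (\<lambda>x. a (inverse t * x)) a \<partial>haarT)"
    by (rule dist1_convT_fejer_kernel_le_average[OF a])
  also have "\<dots> \<le> (\<integral>\<^sup>+t. ennreal \<eta> * ennreal (Re (fejer_kernel K t)) + ennreal C * (2 * ennreal (L1norm a)) \<partial>haarT)"
    using AE_haarT_norm_eq_1
  proof (intro nn_integral_mono_AE, eventually_elim)
    fix t :: complex assume "cmod t = 1"
    then show "ennreal (Re (fejer_kernel K t)) * dist1 (\<lambda>x. a (inverse t * x)) a \<le>
        ennreal \<eta> * ennreal (Re (fejer_kernel K t)) + ennreal C * (2 * ennreal (L1norm a))"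
      unfolding C_def by (rule Re_fejer_kernel_mult_dist1_le[OF ZL1TD(2)[OF a] \<open>\<delta> > 0\<close> _ translation])
  qed
  also have "\<dots> = ennreal \<eta> + ennreal C * (2 * ennreal (L1norm a))"
    using haarT.emeasure_space_1 by (simp add: nn_integral_add nn_integral_cmult nn_integral_Re_fejer_kernel)
  also have "\<dots> = ennreal (\<eta> + C * (2 * L1norm a))"
    using \<open>\<eta> \<ge> 0\<close> L1norm_nonneg[of a] \<open>C \<ge> 0\<close> by (simp add: ennreal_mult ennreal_plus)
  also have "C * (2 * L1norm a) = 8 * L1norm a / (real (K + 1) * \<delta>^2)"
    unfolding C_def by simp
  finally show ?thesis .
qed

lemma fejer_kernel_approximate_identity:
  assumes a: "a \<in> ZL1T" and "\<epsilon> > 0"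
  obtains K0 where "\<And>K. K \<ge> K0 \<Longrightarrow> L1norm (\<lambda>x. convT (fejer_kernel K) a x - a x) < \<epsilon>"
proof -
  note [measurable] = ZL1TD(1)[OF a]
  obtain \<delta> where "\<delta> > 0"
    and \<delta>: "\<And>s. cmod s = 1 \<Longrightarrow> cmod (1 - s) < \<delta> \<Longrightarrow> dist1 (\<lambda>x. a (s * x)) a \<le> ennreal (\<epsilon>/2)"
    using L1_translation_continuous[OF ZL1TD(2)[OF a], of "\<epsilon>/2"] \<open>\<epsilon> > 0\<close> by auto
  obtain K0 :: nat where K0: "16 * L1norm a / (\<epsilon> * \<delta>^2) < real K0"
    using reals_Archimedean2 by blast
  show ?thesis
  proof (rule that)
    fix K assume "K \<ge> K0"
    then have "16 * L1norm a / (\<epsilon> * \<delta>^2) < real (K + 1)"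
      using K0 by linarith
    then have "16 * L1norm a < real (K + 1) * (\<epsilon> * \<delta>^2)"
      using \<open>\<epsilon> > 0\<close> \<open>\<delta> > 0\<close> by (simp add: pos_divide_less_eq)
    then have "8 * L1norm a < \<epsilon>/2 * (real (K + 1) * \<delta>^2)"
      by (simp add: algebra_simps)
    then have tail: "8 * L1norm a / (real (K + 1) * \<delta>^2) < \<epsilon>/2"
      using \<open>\<delta> > 0\<close> by (simp add: pos_divide_less_eq)
    have "L1norm (\<lambda>x. convT (fejer_kernel K) a x - a x) = enn2real (dist1 (convT (fejer_kernel K) a) a)"
      by (rule L1norm_diff_eq_dist1) measurable
    also have "\<dots> \<le> enn2real (ennreal (\<epsilon>/2 + 8 * L1norm a / (real (K + 1) * \<delta>^2)))"
      using \<open>\<delta> > 0\<close> \<open>\<epsilon> > 0\<close>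
      by (intro enn2real_mono dist1_convT_fejer_kernel_le[OF a _ _ \<delta>]) auto
    also have "\<dots> < \<epsilon>"
    proof -
      have "0 \<le> 8 * L1norm a / (real (K + 1) * \<delta>^2)"
        using L1norm_nonneg[of a] by simp
      then show ?thesis
        using tail \<open>\<epsilon> > 0\<close> by (subst enn2real_ennreal) auto
    qed
    finally show "L1norm (\<lambda>x. convT (fejer_kernel K) a x - a x) < \<epsilon>" .
  qed
qed

lemma fejer_kernel_uniform_approximate_identity:
  assumes "finite F" "F \<subseteq> ZL1T" "\<epsilon> > 0"
  obtains N where "\<And>a. a \<in> F \<Longrightarrow> L1norm (\<lambda>x. convT (fejer_kernel N) a x - a x) < \<epsilon>"
proof -
  have "\<exists>K0. \<forall>K\<ge>K0. L1norm (\<lambda>x. convT (fejer_kernel K) a x - a x) < \<epsilon>" if "a \<in> F" for a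
    using fejer_kernel_approximate_identity[of a \<epsilon>] that assms(2,3) by blast
  then obtain K0 where K0: "\<And>a K. a \<in> F \<Longrightarrow> K \<ge> K0 a \<Longrightarrow> L1norm (\<lambda>x. convT (fejer_kernel K) a x - a x) < \<epsilon>"
    by metis
  show ?thesis
    using assms(1) by (intro that[of "Max (insert 0 (K0 ` F))"] K0 Max_ge) auto
qed

section \<open>Bilinear forms and the projective norm\<close>

lemma bilinear_on_add_left:
  "bilinear_on A \<phi> \<Longrightarrow> a \<in> A \<Longrightarrow> a' \<in> A \<Longrightarrow> b \<in> A \<Longrightarrow> \<phi> (\<lambda>x. a x + a' x) b = \<phi> a b + \<phi> a' b"
  unfolding bilinear_on_def by blast

lemma bilinear_on_cmult_left:
  "bilinear_on A \<phi> \<Longrightarrow> a \<in> A \<Longrightarrow> b \<in> A \<Longrightarrow> \<phi> (\<lambda>x. c * a x) b = c * \<phi> a b"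
  unfolding bilinear_on_def by blast

lemma bilinear_on_swap: "bilinear_on A \<phi> \<Longrightarrow> bilinear_on A (\<lambda>a b. \<phi> b a)"
  unfolding bilinear_on_def by blast

lemma bilinear_on_add_right:
  "bilinear_on A \<phi> \<Longrightarrow> a \<in> A \<Longrightarrow> a' \<in> A \<Longrightarrow> b \<in> A \<Longrightarrow> \<phi> b (\<lambda>x. a x + a' x) = \<phi> b a + \<phi> b a'"
  unfolding bilinear_on_def by blast

lemma bilinear_on_cmult_right:
  "bilinear_on A \<phi> \<Longrightarrow> a \<in> A \<Longrightarrow> b \<in> A \<Longrightarrow> \<phi> a (\<lambda>x. c * b x) = c * \<phi> a b"
  unfolding bilinear_on_def by blast

lemma bilinear_on_sum_left:
  assumes \<phi>: "bilinear_on A \<phi>" and A: "fun_subspace A"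
    and u: "\<And>i. i \<in> I \<Longrightarrow> u i \<in> A" and b: "b \<in> A"
  shows "\<phi> (\<lambda>x. \<Sum>i\<in>I. c i * u i x) b = (\<Sum>i\<in>I. c i * \<phi> (u i) b)"
  using u
proof (induction I rule: infinite_finite_induct)
  case (insert i I)
  have ui: "u i \<in> A"
    using insert.prems by simp
  have sum_I: "(\<lambda>x. \<Sum>i\<in>I. c i * u i x) \<in> A"
    using insert.prems by (intro fun_subspace_sum[OF A]) simp
  have "\<phi> (\<lambda>x. \<Sum>i\<in>insert i I. c i * u i x) b = \<phi> (\<lambda>x. c i * u i x + (\<Sum>i\<in>I. c i * u i x)) b"
    using insert.hyps by simp
  also have "\<dots> = \<phi> (\<lambda>x. c i * u i x) b + \<phi> (\<lambda>x. \<Sum>i\<in>I. c i * u i x) b"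
    by (rule bilinear_on_add_left[OF \<phi> fun_subspace_cmult[OF A ui] sum_I b])
  also have "\<dots> = c i * \<phi> (u i) b + (\<Sum>i\<in>I. c i * \<phi> (u i) b)"
    using insert.IH insert.prems bilinear_on_cmult_left[OF \<phi> ui b] by simp
  finally show ?case
    using insert.hyps by simp
qed (use bilinear_on_cmult_left[OF \<phi> fun_subspace_zero[OF A] b, of 0] in simp_all)

lemma bilinear_on_sum_right:
  assumes "bilinear_on A \<phi>" "fun_subspace A" "\<And>i. i \<in> I \<Longrightarrow> u i \<in> A" "b \<in> A"
  shows "\<phi> b (\<lambda>x. \<Sum>i\<in>I. c i * u i x) = (\<Sum>i\<in>I. c i * \<phi> b (u i))"
  using bilinear_on_sum_left[OF bilinear_on_swap[OF assms(1)] assms(2-)] .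

lemma bilinear_on_sum_sum:
  assumes \<phi>: "bilinear_on A \<phi>" and A: "fun_subspace A"
    and u: "\<And>i. i \<in> I \<Longrightarrow> u i \<in> A" and v: "\<And>j. j \<in> J \<Longrightarrow> v j \<in> A"
  shows "\<phi> (\<lambda>x. \<Sum>i\<in>I. c i * u i x) (\<lambda>x. \<Sum>j\<in>J. d j * v j x) =
    (\<Sum>i\<in>I. \<Sum>j\<in>J. c i * d j * \<phi> (u i) (v j))"
proof -
  have "\<phi> (\<lambda>x. \<Sum>i\<in>I. c i * u i x) (\<lambda>x. \<Sum>j\<in>J. d j * v j x) =
      (\<Sum>i\<in>I. c i * \<phi> (u i) (\<lambda>x. \<Sum>j\<in>J. d j * v j x))"
    using u by (intro bilinear_on_sum_left[OF \<phi> A] fun_subspace_sum[OF A v])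
  also have "\<dots> = (\<Sum>i\<in>I. c i * (\<Sum>j\<in>J. d j * \<phi> (u i) (v j)))"
    using u v by (intro sum.cong refl arg_cong2[where f="(*)"] bilinear_on_sum_right[OF \<phi> A])
  finally show ?thesis
    by (simp add: sum_distrib_left mult.assoc)
qed

lemma bilinear_on_cancel:
  assumes \<phi>: "bilinear_on A \<phi>" and A: "fun_subspace A" and "p \<in> A" "\<nu> \<in> A" "\<nu>' \<in> A"
  shows "\<phi> (\<lambda>x. \<alpha> * p x + \<nu> x) (\<lambda>x. c * p x) + \<phi> (\<lambda>x. - p x) (\<lambda>x. c * \<alpha> * p x + \<nu>' x) =
    \<phi> \<nu> (\<lambda>x. c * p x) + \<phi> (\<lambda>x. - p x) \<nu>'"
proof -
  have cp: "(\<lambda>x. c * p x) \<in> A" "(\<lambda>x. \<alpha> * p x) \<in> A" "(\<lambda>x. c * \<alpha> * p x) \<in> A" "(\<lambda>x. - p x) \<in> A"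
    using fun_subspace_cmult[OF A \<open>p \<in> A\<close>] fun_subspace_uminus[OF A \<open>p \<in> A\<close>] by auto
  have "\<phi> (\<lambda>x. \<alpha> * p x + \<nu> x) (\<lambda>x. c * p x) = \<alpha> * (c * \<phi> p p) + \<phi> \<nu> (\<lambda>x. c * p x)"
    using bilinear_on_add_left[OF \<phi> cp(2) \<open>\<nu> \<in> A\<close> cp(1)]
      bilinear_on_cmult_left[OF \<phi> \<open>p \<in> A\<close> cp(1)] bilinear_on_cmult_right[OF \<phi> \<open>p \<in> A\<close> \<open>p \<in> A\<close>]
    by simp
  moreover have "\<phi> (\<lambda>x. - p x) (\<lambda>x. c * \<alpha> * p x + \<nu>' x) = - (c * \<alpha> * \<phi> p p) + \<phi> (\<lambda>x. - p x) \<nu>'"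
    using bilinear_on_add_right[OF \<phi> cp(3) \<open>\<nu>' \<in> A\<close> cp(4)]
      bilinear_on_cmult_right[OF \<phi> cp(4) \<open>p \<in> A\<close>, of "c * \<alpha>"]
      bilinear_on_cmult_left[OF \<phi> \<open>p \<in> A\<close> \<open>p \<in> A\<close>, of "-1"]
    by simp
  ultimately show ?thesis
    by (simp add: algebra_simps)
qed

lemma proj_norm_le:
  assumes "\<And>a. a \<in> A \<Longrightarrow> nrm a \<ge> 0" "set ys \<subseteq> A \<times> A" "tensor_eq A xs ys"
  shows "proj_norm A nrm xs \<le> (\<Sum>(a, b)\<leftarrow>ys. nrm a * nrm b)"
  unfolding proj_norm_def
proof (rule cInf_lower)
  show "bdd_below {\<Sum>(a, b)\<leftarrow>ys. nrm a * nrm b | ys. set ys \<subseteq> A \<times> A \<and> tensor_eq A xs ys}"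
    using assms(1) by (intro bdd_belowI[of _ 0]) (force intro!: sum_list_nonneg)
qed (use assms(2,3) in blast)

section \<open>The Fej\'er diagonal\<close>

definition fejer_diagonal :: "nat \<Rightarrow> (cfun \<times> cfun) list" where
  "fejer_diagonal N = map (\<lambda>n. (cosine_char n, \<lambda>x. fejer_coeff N n * cosine_char n x)) [0..<Suc N]"

lemma sum_list_fejer_diagonal:
  "(\<Sum>(a, b)\<leftarrow>fejer_diagonal N. f a b) = (\<Sum>n\<le>N. f (cosine_char n) (\<lambda>x. fejer_coeff N n * cosine_char n x))"
  unfolding fejer_diagonal_def
  by (simp add: comp_def sum_list_distinct_conv_sum_set atLeast0LessThan lessThan_Suc_atMost del: upt_Suc)

lemma ZL1T_cmult_cosine_char: "(\<lambda>x. c * cosine_char n x) \<in> ZL1T"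
  by (intro fun_subspace_cmult[OF fun_subspace_ZL1T] ZL1T_cosine_char)

lemma set_fejer_diagonal: "set (fejer_diagonal N) \<subseteq> ZL1T \<times> ZL1T"
  unfolding fejer_diagonal_def using ZL1T_cosine_char ZL1T_cmult_cosine_char by auto

text \<open>Each \<open>cosine_char n\<close> is an idempotent, so the product of the diagonal is the
  Fej\'er kernel.\<close>

lemma tensor_mult_fejer_diagonal:
  assumes "x \<noteq> 0"
  shows "tensor_mult convT (fejer_diagonal N) x = fejer_kernel N x"
proof -
  have "fourier_coeff (\<lambda>x. c * cosine_char n x) n = c" for c n
    using fourier_coeff_cosine_char[of n n] unfolding fourier_coeff_def by (simp add: mult.assoc)
  then show ?thesis
    unfolding tensor_mult_def sum_list_fejer_diagonal fejer_kernel_def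
    using convT_cosine_char_left[OF ZL1T_cmult_cosine_char assms] by simp
qed

lemma tensor_mult_fejer_diagonal_measurable[measurable]:
  "tensor_mult convT (fejer_diagonal N) \<in> borel_measurable borel"
  unfolding tensor_mult_def sum_list_fejer_diagonal by measurable

lemma convT_tensor_mult_fejer_diagonal:
  assumes a: "a \<in> ZL1T" and x: "cmod x = 1"
  shows "convT (tensor_mult convT (fejer_diagonal N)) a x = convT (fejer_kernel N) a x"
    and "convT a (tensor_mult convT (fejer_diagonal N)) x = convT (fejer_kernel N) a x"
proof -
  note [measurable] = ZL1TD(1)[OF a]
  have "x \<noteq> 0" using x by auto
  then show left: "convT (tensor_mult convT (fejer_diagonal N)) a x = convT (fejer_kernel N) a x"
    unfolding convT_def[of "tensor_mult convT (fejer_diagonal N)"] convT_def[of "fejer_kernel N"]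
  proof (intro integral_cong_AE)
    show "AE t in haarT. tensor_mult convT (fejer_diagonal N) (x * inverse t) * a t =
        fejer_kernel N (x * inverse t) * a t"
      using AE_haarT_nonzero by eventually_elim (simp add: tensor_mult_fejer_diagonal \<open>x \<noteq> 0\<close>)
  qed auto
  show "convT a (tensor_mult convT (fejer_diagonal N)) x = convT (fejer_kernel N) a x"
    using left convT_commute[OF x, of a "tensor_mult convT (fejer_diagonal N)"] by simp
qed

lemma L1norm_convT_tensor_mult_fejer_diagonal:
  assumes a: "a \<in> ZL1T"
  shows "L1norm (\<lambda>x. convT (tensor_mult convT (fejer_diagonal N)) a x - a x) =
      L1norm (\<lambda>x. convT (fejer_kernel N) a x - a x)"
    and "L1norm (\<lambda>x. convT a (tensor_mult convT (fejer_diagonal N)) x - a x) =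
      L1norm (\<lambda>x. convT (fejer_kernel N) a x - a x)"
  using ZL1TD(1)[OF a] convT_tensor_mult_fejer_diagonal[OF a]
  by (auto intro!: L1norm_cong_circle)

definition eigen_defect_left :: "cfun \<Rightarrow> nat \<Rightarrow> cfun" where
  "eigen_defect_left a n x = convT (cosine_char n) a x - fourier_coeff a n * cosine_char n x"

definition eigen_defect_right :: "cfun \<Rightarrow> nat \<Rightarrow> cfun" where
  "eigen_defect_right a n x = convT a (cosine_char n) x - fourier_coeff a n * cosine_char n x"

lemma eigen_defect_measurable[measurable]:
  assumes "a \<in> borel_measurable borel"
  shows "eigen_defect_left a n \<in> borel_measurable borel" "eigen_defect_right a n \<in> borel_measurable borel"
  unfolding eigen_defect_left_def eigen_defect_right_def using assms by measurable

lemma eigen_defect_vanishing_on_circle: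
  assumes a: "a \<in> ZL1T" and x: "cmod x = 1"
  shows "eigen_defect_left a n x = 0" "eigen_defect_right a n x = 0"
proof -
  have "x \<noteq> 0" using x by auto
  then show "eigen_defect_left a n x = 0" "eigen_defect_right a n x = 0"
    unfolding eigen_defect_left_def eigen_defect_right_def
    by (simp_all add: convT_cosine_char_left[OF a] convT_cosine_char_right[OF a x])
qed

lemma ZL1T_eigen_defect:
  assumes a: "a \<in> ZL1T"
  shows "eigen_defect_left a n \<in> ZL1T" "eigen_defect_right a n \<in> ZL1T"
  using eigen_defect_vanishing_on_circle[OF a] ZL1TD(1)[OF a]
  by (auto intro!: ZL1T_vanishing_on_circle)

lemma tensor_eq_tensor_commutator_fejer_diagonal:
  assumes a: "a \<in> ZL1T"
  shows "tensor_eq ZL1T (tensor_commutator convT a (fejer_diagonal N))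
    (map (\<lambda>n. (eigen_defect_right a n, \<lambda>x. fejer_coeff N n * cosine_char n x)) [0..<Suc N] @
     map (\<lambda>n. (\<lambda>x. - cosine_char n x, \<lambda>x. fejer_coeff N n * eigen_defect_left a n x)) [0..<Suc N])"
  unfolding tensor_eq_def
proof (intro allI impI)
  fix \<phi> assume \<phi>: "bilinear_on ZL1T \<phi>"
  define c where "c n = fejer_coeff N n" for n
  have "convT a (cosine_char n) = (\<lambda>x. fourier_coeff a n * cosine_char n x + eigen_defect_right a n x)"
      "convT (\<lambda>x. c n * cosine_char n x) a =
        (\<lambda>x. c n * fourier_coeff a n * cosine_char n x + c n * eigen_defect_left a n x)" for n
    unfolding eigen_defect_left_def eigen_defect_right_def convT_cmult_left by (auto simp: algebra_simps)
  then have cancel: "\<phi> (convT a (cosine_char n)) (\<lambda>x. c n * cosine_char n x) +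
      \<phi> (\<lambda>x. - cosine_char n x) (convT (\<lambda>x. c n * cosine_char n x) a) =
      \<phi> (eigen_defect_right a n) (\<lambda>x. c n * cosine_char n x) +
      \<phi> (\<lambda>x. - cosine_char n x) (\<lambda>x. c n * eigen_defect_left a n x)" for n
    using bilinear_on_cancel[OF \<phi> fun_subspace_ZL1T ZL1T_cosine_char[of n] ZL1T_eigen_defect(2)[OF a]
        fun_subspace_cmult[OF fun_subspace_ZL1T ZL1T_eigen_defect(1)[OF a]], where \<alpha>="fourier_coeff a n" and c="c n"]
    by simp
  have "(\<Sum>(x, y)\<leftarrow>tensor_commutator convT a (fejer_diagonal N). \<phi> x y) =
      (\<Sum>n<Suc N. \<phi> (convT a (cosine_char n)) (\<lambda>x. c n * cosine_char n x) +
        \<phi> (\<lambda>x. - cosine_char n x) (convT (\<lambda>x. c n * cosine_char n x) a))"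
    unfolding tensor_commutator_def fejer_diagonal_def c_def
    by (simp add: comp_def sum_list_distinct_conv_sum_set atLeast0LessThan sum.distrib
        del: upt_Suc sum.lessThan_Suc)
  also have "\<dots> = (\<Sum>n<Suc N. \<phi> (eigen_defect_right a n) (\<lambda>x. c n * cosine_char n x) +
      \<phi> (\<lambda>x. - cosine_char n x) (\<lambda>x. c n * eigen_defect_left a n x))"
    using cancel by simp
  finally show "(\<Sum>(x, y)\<leftarrow>tensor_commutator convT a (fejer_diagonal N). \<phi> x y) =
      (\<Sum>(x, y)\<leftarrow>map (\<lambda>n. (eigen_defect_right a n, \<lambda>x. fejer_coeff N n * cosine_char n x)) [0..<Suc N] @
        map (\<lambda>n. (\<lambda>x. - cosine_char n x, \<lambda>x. fejer_coeff N n * eigen_defect_left a n x)) [0..<Suc N]. \<phi> x y)"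
    unfolding c_def
    by (simp add: comp_def sum_list_distinct_conv_sum_set atLeast0LessThan sum.distrib
        del: upt_Suc sum.lessThan_Suc)
qed

lemma proj_norm_tensor_commutator_fejer_diagonal:
  assumes a: "a \<in> ZL1T"
  shows "proj_norm ZL1T L1norm (tensor_commutator convT a (fejer_diagonal N)) \<le> 0"
proof -
  note [measurable] = ZL1TD(1)[OF a]
  have "proj_norm ZL1T L1norm (tensor_commutator convT a (fejer_diagonal N)) \<le>
      (\<Sum>(a, b)\<leftarrow>map (\<lambda>n. (eigen_defect_right a n, \<lambda>x. fejer_coeff N n * cosine_char n x)) [0..<Suc N] @
        map (\<lambda>n. (\<lambda>x. - cosine_char n x, \<lambda>x. fejer_coeff N n * eigen_defect_left a n x)) [0..<Suc N].
        L1norm a * L1norm b)"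
    using ZL1T_eigen_defect[OF a] ZL1T_cmult_cosine_char fun_subspace_uminus[OF fun_subspace_ZL1T ZL1T_cosine_char]
      fun_subspace_cmult[OF fun_subspace_ZL1T ZL1T_eigen_defect(1)[OF a]]
    by (intro proj_norm_le L1norm_nonneg tensor_eq_tensor_commutator_fejer_diagonal[OF a]) (auto simp del: upt_Suc)
  also have "\<dots> = 0"
    using eigen_defect_vanishing_on_circle[OF a]
    by (simp add: comp_def L1norm_vanishing_on_circle del: upt_Suc)
  finally show ?thesis .
qed

section \<open>A bounded representation of the Fej\'er diagonal\<close>

lemma sum_cos_multiple_angle:
  fixes j M :: nat
  assumes "j < M"
  shows "(\<Sum>k<M. cos (real j * (2 * pi * real k / real M))) = (if j = 0 then real M else 0)"
proof (cases "j = 0")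
  case False
  define \<theta> where "\<theta> = 2 * pi * real j / real M"
  define z where "z = cis \<theta>"
  have "0 < \<theta>" "\<theta> < 2 * pi"
    unfolding \<theta>_def using assms False by (auto simp: field_simps)
  have "z \<noteq> 1"
  proof
    assume "z = 1"
    then obtain n :: int where n: "\<theta> = of_int (2 * n) * pi"
      unfolding z_def cis_conv_exp exp_eq_1 by auto
    then have "0 < n" "n < 1"
      using \<open>0 < \<theta>\<close> \<open>\<theta> < 2 * pi\<close> by (auto simp: zero_less_mult_iff mult_less_cancel_right2)
    then show False by simp
  qed
  moreover have "z ^ M = 1"
    unfolding z_def Complex.DeMoivre \<theta>_def using assms by simp
  ultimately have "(\<Sum>k<M. z^k) = 0"
    using one_diff_power_eq[of z M] by simp
  moreover have "(\<Sum>k<M. cos (real j * (2 * pi * real k / real M))) = Re (\<Sum>k<M. z^k)"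
    unfolding Re_sum z_def Complex.DeMoivre \<theta>_def by (intro sum.cong refl) (simp add: mult_ac)
  ultimately show ?thesis
    using False by simp
qed simp

lemma sum_cos_mult_cos_multiple_angle:
  fixes n m L M :: nat
  assumes "n \<le> L" "m \<le> L" "2 * L < M"
  defines "\<theta> k \<equiv> 2 * pi * real k / real M"
  shows "(\<Sum>k<M. cos (real n * \<theta> k) * cos (real m * \<theta> k)) =
    (if n = m then if n = 0 then real M else real M / 2 else 0)"
proof -
  define d where "d = (if n \<le> m then m - n else n - m)"
  have product_to_sum:
    "cos (real n * \<theta> k) * cos (real m * \<theta> k) = (cos (real d * \<theta> k) + cos (real (n + m) * \<theta> k)) / 2" for k
  proof -
    have "real n * \<theta> k - real m * \<theta> k = (if n \<le> m then - (real d * \<theta> k) else real d * \<theta> k)"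
      unfolding d_def by (simp add: of_nat_diff algebra_simps)
    then have "cos (real n * \<theta> k - real m * \<theta> k) = cos (real d * \<theta> k)"
      by (simp split: if_splits)
    then show ?thesis
      by (simp add: cos_times_cos distrib_right)
  qed
  have "(\<Sum>k<M. cos (real n * \<theta> k) * cos (real m * \<theta> k)) =
      ((\<Sum>k<M. cos (real d * \<theta> k)) + (\<Sum>k<M. cos (real (n + m) * \<theta> k))) / 2"
    unfolding product_to_sum by (simp only: sum_divide_distrib[symmetric] sum.distrib)
  also have "\<dots> = ((if d = 0 then real M else 0) + (if n + m = 0 then real M else 0)) / 2"
  proof -
    have "d < M" "n + m < M"
      using assms(1-3) unfolding d_def by auto
    then show ?thesis
      unfolding \<theta>_def by (simp only: sum_cos_multiple_angle)
  qed
  also have "\<dots> = (if n = m then if n = 0 then real M else real M / 2 else 0)"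
    unfolding d_def by auto
  finally show ?thesis .
qed

definition cos_series :: "nat \<Rightarrow> (nat \<Rightarrow> complex) \<Rightarrow> real \<Rightarrow> cfun" where
  "cos_series K w \<theta> x = (\<Sum>n\<le>K. (w n * of_real (cos (real n * \<theta>))) * cosine_char n x)"

lemma ZL1T_cos_series: "cos_series K w \<theta> \<in> ZL1T"
  unfolding cos_series_def by (intro fun_subspace_sum fun_subspace_ZL1T ZL1T_cosine_char)

lemma cos_series_extend:
  assumes "K \<le> L" "\<And>n. K < n \<Longrightarrow> w n = 0"
  shows "cos_series K w \<theta> x = cos_series L w \<theta> x"
  unfolding cos_series_def using assms by (intro sum.mono_neutral_left) auto

lemma cosine_char_rotations:
  "cosine_char n (cis \<theta> * x) + cosine_char n (cis (- \<theta>) * x) = 2 * of_real (cos (real n * \<theta>)) * cosine_char n x"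
proof (cases "n = 0")
  case False
  have rotate: "cis \<theta> ^ n = cis (real n * \<theta>)" "inverse (cis \<theta>) ^ n = cis (- (real n * \<theta>))"
      "cis (- \<theta>) ^ n = cis (- (real n * \<theta>))" "inverse (cis (- \<theta>)) ^ n = cis (real n * \<theta>)"
    using Complex.DeMoivre[of \<theta> n] Complex.DeMoivre[of "- \<theta>" n] by simp_all
  have "cosine_char n (cis \<theta> * x) + cosine_char n (cis (- \<theta>) * x) =
      cis (real n * \<theta>) * x^n + cis (- (real n * \<theta>)) * (inverse x)^n +
      (cis (- (real n * \<theta>)) * x^n + cis (real n * \<theta>) * (inverse x)^n)"
    unfolding cosine_char_def if_not_P[OF False] power_mult_distrib inverse_mult_distrib rotate ..
  also have "\<dots> = (cis (real n * \<theta>) + cis (- (real n * \<theta>))) * cosine_char n x"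
    using False unfolding cosine_char_def by (simp add: algebra_simps)
  also have "cis (real n * \<theta>) + cis (- (real n * \<theta>)) = 2 * of_real (cos (real n * \<theta>))"
    by (simp add: complex_eq_iff)
  finally show ?thesis .
qed simp

lemma cos_series_fejer_eq_rotations:
  "cos_series K (fejer_coeff K) \<theta> x = (fejer_kernel K (cis \<theta> * x) + fejer_kernel K (cis (- \<theta>) * x)) / 2"
proof -
  have "fejer_kernel K (cis \<theta> * x) + fejer_kernel K (cis (- \<theta>) * x) =
      (\<Sum>n\<le>K. fejer_coeff K n * (cosine_char n (cis \<theta> * x) + cosine_char n (cis (- \<theta>) * x)))"
    unfolding fejer_kernel_def by (simp add: sum.distrib[symmetric] distrib_left)
  also have "\<dots> = 2 * cos_series K (fejer_coeff K) \<theta> x"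
    unfolding cos_series_def cosine_char_rotations sum_distrib_left by (simp add: mult_ac)
  finally show ?thesis
    by simp
qed

lemma L1norm_cos_series_fejer_le: "L1norm (cos_series K (fejer_coeff K) \<theta>) \<le> 1"
proof -
  note rot = integral_norm_fejer_kernel_rotate[of "cis \<theta>" K] integral_norm_fejer_kernel_rotate[of "cis (- \<theta>)" K]
  have "L1norm (cos_series K (fejer_coeff K) \<theta>) \<le>
      (\<integral>x. (cmod (fejer_kernel K (cis \<theta> * x)) + cmod (fejer_kernel K (cis (- \<theta>) * x))) / 2 \<partial>haarT)"
    unfolding L1norm_def
  proof (rule integral_mono)
    show "integrable haarT (\<lambda>x. cmod (cos_series K (fejer_coeff K) \<theta> x))"
      using ZL1TD(2)[OF ZL1T_cos_series] by simp
    fix x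
    show "cmod (cos_series K (fejer_coeff K) \<theta> x) \<le>
        (cmod (fejer_kernel K (cis \<theta> * x)) + cmod (fejer_kernel K (cis (- \<theta>) * x))) / 2"
      unfolding cos_series_fejer_eq_rotations by (simp add: norm_divide norm_triangle_ineq divide_right_mono)
  qed (use rot in simp)
  also have "\<dots> = 1"
    using rot by simp
  finally show ?thesis .
qed

text \<open>Discrete orthogonality of \<open>cos (n \<theta>\<^sub>k)\<close> over the \<open>M\<close>-th roots of unity turns a sum of
  elementary tensors of cosine series back into a diagonal one.\<close>

lemma sum_bilinear_cos_series:
  assumes \<phi>: "bilinear_on A \<phi>" and A: "fun_subspace A" "\<And>n. cosine_char n \<in> A"
    and "K \<le> L" "2 * L < M"
  defines "\<theta> k \<equiv> 2 * pi * real k / real M"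
  shows "(\<Sum>k<M. \<phi> (cos_series K w (\<theta> k)) (cos_series L w' (\<theta> k))) =
    (\<Sum>n\<le>K. w n * w' n * of_real (if n = 0 then real M else real M / 2) * \<phi> (cosine_char n) (cosine_char n))"
proof -
  define c where "c n m = w n * w' m * \<phi> (cosine_char n) (cosine_char m)" for n m
  have "\<phi> (cos_series K w (\<theta> k)) (cos_series L w' (\<theta> k)) =
      (\<Sum>n\<le>K. \<Sum>m\<le>L. (w n * of_real (cos (real n * \<theta> k))) * (w' m * of_real (cos (real m * \<theta> k))) *
        \<phi> (cosine_char n) (cosine_char m))" for k
    unfolding cos_series_def by (rule bilinear_on_sum_sum[OF \<phi> A(1) A(2) A(2)])
  then have "(\<Sum>k<M. \<phi> (cos_series K w (\<theta> k)) (cos_series L w' (\<theta> k))) =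
      (\<Sum>k<M. \<Sum>n\<le>K. \<Sum>m\<le>L. c n m * of_real (cos (real n * \<theta> k) * cos (real m * \<theta> k)))"
    unfolding c_def by (simp add: mult_ac)
  also have "\<dots> = (\<Sum>n\<le>K. \<Sum>m\<le>L. \<Sum>k<M. c n m * of_real (cos (real n * \<theta> k) * cos (real m * \<theta> k)))"
    by (subst sum.swap) (simp add: sum.swap[of _ "{..<M}"])
  also have "\<dots> = (\<Sum>n\<le>K. \<Sum>m\<le>L. c n m * of_real (\<Sum>k<M. cos (real n * \<theta> k) * cos (real m * \<theta> k)))"
    by (simp add: sum_distrib_left)
  also have "\<dots> = (\<Sum>n\<le>K. \<Sum>m\<le>L. c n m * of_real (if n = m then if n = 0 then real M else real M / 2 else 0))"
  proof (intro sum.cong refl)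
    fix n m assume "n \<in> {..K}" "m \<in> {..L}"
    then have "n \<le> L" "m \<le> L" using \<open>K \<le> L\<close> by auto
    show "c n m * of_real (\<Sum>k<M. cos (real n * \<theta> k) * cos (real m * \<theta> k)) =
        c n m * of_real (if n = m then if n = 0 then real M else real M / 2 else 0)"
      unfolding \<theta>_def sum_cos_mult_cos_multiple_angle[OF \<open>n \<le> L\<close> \<open>m \<le> L\<close> \<open>2 * L < M\<close>] ..
  qed
  also have "\<dots> = (\<Sum>n\<le>K. c n n * of_real (if n = 0 then real M else real M / 2))"
    using \<open>K \<le> L\<close>
    by (intro sum.cong refl) (simp add: if_distrib[of "\<lambda>r. c _ _ * of_real r"] sum.delta cong: if_cong)
  finally show ?thesis
    unfolding c_def by (simp add: mult_ac)
qed

definition vallee_poussin_coeff :: "nat \<Rightarrow> nat \<Rightarrow> complex" where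
  "vallee_poussin_coeff N m = 2 * fejer_coeff (2 * N + 1) m - fejer_coeff N m"

lemma vallee_poussin_coeff_low:
  assumes "m \<le> N"
  shows "vallee_poussin_coeff N m = 1"
proof -
  have "vallee_poussin_coeff N m = of_real (2 * (1 - real m / real (2 * N + 1 + 1)) - (1 - real m / real (N + 1)))"
    unfolding vallee_poussin_coeff_def fejer_coeff_def using assms by simp
  also have "2 * (1 - real m / real (2 * N + 1 + 1)) - (1 - real m / real (N + 1)) = 1"
  proof -
    have "real (2 * N + 1 + 1) = 2 * real (N + 1)"
      by simp
    then have halve: "real m / real (2 * N + 1 + 1) = (real m / real (N + 1)) / 2"
      unfolding divide_divide_eq_left by (simp only: mult.commute)
    have "2 * (1 - r / 2) - (1 - r) = (1::real)" for r
      by simp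
    then show ?thesis
      unfolding halve .
  qed
  finally show ?thesis
    by simp
qed

lemma vallee_poussin_sampling_weight:
  assumes "n \<le> N" "M > 0"
  shows "of_real (2 / real M) * vallee_poussin_coeff N n * of_real (if n = 0 then real M else real M / 2) =
    (if n = 0 then 2 else 1 :: complex)"
proof -
  have weight: "2 / real M * (if n = 0 then real M else real M / 2) = (if n = 0 then 2 else 1)"
    using assms(2) by simp
  have "of_real (2 / real M) * vallee_poussin_coeff N n * of_real (if n = 0 then real M else real M / 2) =
      complex_of_real (2 / real M * (if n = 0 then real M else real M / 2))"
    by (simp only: vallee_poussin_coeff_low[OF assms(1)] mult_1_right of_real_mult)
  also have "\<dots> = (if n = 0 then 2 else 1)"
    unfolding weight by simp
  finally show ?thesis .
qed

text \<open>The diagonal plus \<open>1 \<otimes> 1\<close>, written with \<open>4N + 4\<close> elementary tensors whose first factors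
  have norm at most \<open>1\<close> and whose second factors, de la Vall\'ee-Poussin type kernels,
  have norm at most \<open>6 / (4N + 4)\<close>.\<close>

definition fejer_diagonal_split :: "nat \<Rightarrow> (cfun \<times> cfun) list" where
  "fejer_diagonal_split N =
     map (\<lambda>k. (cos_series N (fejer_coeff N) (2 * pi * real k / real (4 * N + 4)),
               cos_series (2 * N + 1) (\<lambda>m. of_real (2 / real (4 * N + 4)) * vallee_poussin_coeff N m)
                 (2 * pi * real k / real (4 * N + 4))))
       [0..<4 * N + 4] @ [(\<lambda>x. -1, \<lambda>x. 1)]"

lemma set_fejer_diagonal_split: "set (fejer_diagonal_split N) \<subseteq> ZL1T \<times> ZL1T"
  unfolding fejer_diagonal_split_def using ZL1T_cos_series ZL1T_const by auto

lemma tensor_eq_fejer_diagonal_split: "tensor_eq ZL1T (fejer_diagonal N) (fejer_diagonal_split N)"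
  unfolding tensor_eq_def
proof (intro allI impI)
  fix \<phi> assume \<phi>: "bilinear_on ZL1T \<phi>"
  define M where "M = 4 * N + 4"
  have "(\<Sum>k<M. \<phi> (cos_series N (fejer_coeff N) (2 * pi * real k / real M))
      (cos_series (2 * N + 1) (\<lambda>m. of_real (2 / real M) * vallee_poussin_coeff N m) (2 * pi * real k / real M))) =
      (\<Sum>n\<le>N. fejer_coeff N n * (of_real (2 / real M) * vallee_poussin_coeff N n) *
        of_real (if n = 0 then real M else real M / 2) * \<phi> (cosine_char n) (cosine_char n))"
    unfolding M_def by (rule sum_bilinear_cos_series[OF \<phi> fun_subspace_ZL1T ZL1T_cosine_char]) auto
  also have "\<dots> = (\<Sum>n\<le>N. fejer_coeff N n * \<phi> (cosine_char n) (cosine_char n) +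
      (if n = 0 then fejer_coeff N n * \<phi> (cosine_char n) (cosine_char n) else 0))"
  proof (intro sum.cong refl)
    fix n assume "n \<in> {..N}"
    have "fejer_coeff N n * (of_real (2 / real M) * vallee_poussin_coeff N n) *
        of_real (if n = 0 then real M else real M / 2) * \<phi> (cosine_char n) (cosine_char n) =
        (of_real (2 / real M) * vallee_poussin_coeff N n * of_real (if n = 0 then real M else real M / 2)) *
        (fejer_coeff N n * \<phi> (cosine_char n) (cosine_char n))"
      by (simp only: mult_ac)
    also have "\<dots> = (if n = 0 then 2 else 1) * (fejer_coeff N n * \<phi> (cosine_char n) (cosine_char n))"
      using \<open>n \<in> {..N}\<close> vallee_poussin_sampling_weight[of n N M] unfolding M_def by simp
    finally show "fejer_coeff N n * (of_real (2 / real M) * vallee_poussin_coeff N n) *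
        of_real (if n = 0 then real M else real M / 2) * \<phi> (cosine_char n) (cosine_char n) =
        fejer_coeff N n * \<phi> (cosine_char n) (cosine_char n) +
        (if n = 0 then fejer_coeff N n * \<phi> (cosine_char n) (cosine_char n) else 0)"
      by (cases "n = 0") simp_all
  qed
  also have "\<dots> = (\<Sum>n\<le>N. fejer_coeff N n * \<phi> (cosine_char n) (cosine_char n)) +
      \<phi> (cosine_char 0) (cosine_char 0)"
    by (simp add: sum.distrib)
  finally have "(\<Sum>(a, b)\<leftarrow>fejer_diagonal_split N. \<phi> a b) =
      (\<Sum>n\<le>N. fejer_coeff N n * \<phi> (cosine_char n) (cosine_char n)) + \<phi> (cosine_char 0) (cosine_char 0) +
      \<phi> (\<lambda>x. -1) (\<lambda>x. 1)"
    unfolding fejer_diagonal_split_def M_def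
    by (simp add: comp_def sum_list_distinct_conv_sum_set atLeast0LessThan del: upt_Suc)
  moreover have "\<phi> (\<lambda>x. -1) (\<lambda>x. 1) = - \<phi> (cosine_char 0) (cosine_char 0)"
  proof -
    have "(\<lambda>x. 1) = cosine_char 0" "(\<lambda>x. -1) = (\<lambda>x. (-1) * cosine_char 0 x)"
      by auto
    then show ?thesis
      using bilinear_on_cmult_left[OF \<phi> ZL1T_cosine_char ZL1T_cosine_char, of "-1" 0 0] by simp
  qed
  moreover have "(\<Sum>(a, b)\<leftarrow>fejer_diagonal N. \<phi> a b) = (\<Sum>n\<le>N. fejer_coeff N n * \<phi> (cosine_char n) (cosine_char n))"
    unfolding sum_list_fejer_diagonal by (intro sum.cong refl bilinear_on_cmult_right[OF \<phi> ZL1T_cosine_char ZL1T_cosine_char])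
  ultimately show "(\<Sum>(a, b)\<leftarrow>fejer_diagonal N. \<phi> a b) = (\<Sum>(a, b)\<leftarrow>fejer_diagonal_split N. \<phi> a b)"
    by simp
qed

lemma cos_series_vallee_poussin:
  "cos_series (2 * N + 1) (\<lambda>m. c * vallee_poussin_coeff N m) \<theta> x =
    c * (2 * cos_series (2 * N + 1) (fejer_coeff (2 * N + 1)) \<theta> x - cos_series N (fejer_coeff N) \<theta> x)"
proof -
  have extend: "cos_series N (fejer_coeff N) \<theta> x = cos_series (2 * N + 1) (fejer_coeff N) \<theta> x"
    by (rule cos_series_extend) (auto simp: fejer_coeff_eq_0)
  show ?thesis
    unfolding extend unfolding cos_series_def vallee_poussin_coeff_def
    by (simp add: sum_distrib_left sum_subtractf[symmetric] algebra_simps del: sum.atMost_Suc)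
qed

lemma L1norm_cos_series_vallee_poussin_le:
  assumes "c \<ge> 0"
  shows "L1norm (cos_series (2 * N + 1) (\<lambda>m. of_real c * vallee_poussin_coeff N m) \<theta>) \<le> 3 * c"
proof -
  let ?F = "\<lambda>K. cos_series K (fejer_coeff K) \<theta>"
  have integrable: "integrable haarT (\<lambda>x. cmod (?F K x))" for K
    using ZL1TD(2)[OF ZL1T_cos_series] by simp
  have "L1norm (cos_series (2 * N + 1) (\<lambda>m. of_real c * vallee_poussin_coeff N m) \<theta>) \<le>
      (\<integral>x. c * (2 * cmod (?F (2 * N + 1) x) + cmod (?F N x)) \<partial>haarT)"
    unfolding L1norm_def
  proof (rule integral_mono)
    show "integrable haarT (\<lambda>x. cmod (cos_series (2 * N + 1) (\<lambda>m. of_real c * vallee_poussin_coeff N m) \<theta> x))"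
      using ZL1TD(2)[OF ZL1T_cos_series] by simp
    fix x
    have "cmod (2 * ?F (2 * N + 1) x - ?F N x) \<le> 2 * cmod (?F (2 * N + 1) x) + cmod (?F N x)"
      using norm_triangle_ineq4[of "2 * ?F (2 * N + 1) x" "?F N x"] by (simp add: norm_mult)
    then show "cmod (cos_series (2 * N + 1) (\<lambda>m. of_real c * vallee_poussin_coeff N m) \<theta> x) \<le>
        c * (2 * cmod (?F (2 * N + 1) x) + cmod (?F N x))"
      unfolding cos_series_vallee_poussin using assms by (simp add: norm_mult mult_left_mono)
  qed (use integrable in simp)
  also have "\<dots> = c * (2 * L1norm (?F (2 * N + 1)) + L1norm (?F N))"
    unfolding L1norm_def using integrable by simp
  also have "\<dots> \<le> c * (2 * 1 + 1)"
    using assms L1norm_cos_series_fejer_le by (intro mult_left_mono add_mono) auto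
  finally show ?thesis
    by simp
qed

lemma proj_norm_fejer_diagonal_le: "proj_norm ZL1T L1norm (fejer_diagonal N) \<le> 7"
proof -
  define M where "M = 4 * N + 4"
  have "proj_norm ZL1T L1norm (fejer_diagonal N) \<le> (\<Sum>(a, b)\<leftarrow>fejer_diagonal_split N. L1norm a * L1norm b)"
    using set_fejer_diagonal_split tensor_eq_fejer_diagonal_split by (intro proj_norm_le L1norm_nonneg)
  also have "\<dots> = (\<Sum>k<M. L1norm (cos_series N (fejer_coeff N) (2 * pi * real k / real M)) *
      L1norm (cos_series (2 * N + 1) (\<lambda>m. of_real (2 / real M) * vallee_poussin_coeff N m)
        (2 * pi * real k / real M))) + 1"
    unfolding fejer_diagonal_split_def M_def
    by (simp add: comp_def L1norm_const sum_list_distinct_conv_sum_set atLeast0LessThan)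
  also have "\<dots> \<le> (\<Sum>k<M. 1 * (3 * (2 / real M))) + 1"
    by (intro add_right_mono sum_mono mult_mono L1norm_cos_series_fejer_le
        L1norm_cos_series_vallee_poussin_le L1norm_nonneg) auto
  also have "\<dots> = 7"
    unfolding M_def by (simp add: field_simps)
  finally show ?thesis .
qed

theorem theorem1p13:
  shows "amenable_on ZL1T L1norm convT"
  unfolding amenable_on_def
proof (intro exI[of _ 7] allI impI)
  fix F :: "cfun set" and \<epsilon> :: real
  assume "finite F \<and> F \<subseteq> ZL1T \<and> \<epsilon> > 0"
  then obtain N where N: "\<And>a. a \<in> F \<Longrightarrow> L1norm (\<lambda>x. convT (fejer_kernel N) a x - a x) < \<epsilon>"
    using fejer_kernel_uniform_approximate_identity by blast
  show "\<exists>xs. set xs \<subseteq> ZL1T \<times> ZL1T \<and> proj_norm ZL1T L1norm xs \<le> 7 \<and>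
      (\<forall>a\<in>F. L1norm (\<lambda>x. convT (tensor_mult convT xs) a x - a x) < \<epsilon> \<and>
              L1norm (\<lambda>x. convT a (tensor_mult convT xs) x - a x) < \<epsilon> \<and>
              proj_norm ZL1T L1norm (tensor_commutator convT a xs) < \<epsilon>)"
  proof (intro exI[of _ "fejer_diagonal N"] conjI ballI set_fejer_diagonal proj_norm_fejer_diagonal_le)
    fix a assume "a \<in> F"
    with \<open>finite F \<and> F \<subseteq> ZL1T \<and> \<epsilon> > 0\<close> have a: "a \<in> ZL1T" and "\<epsilon> > 0" by auto
    show "L1norm (\<lambda>x. convT (tensor_mult convT (fejer_diagonal N)) a x - a x) < \<epsilon>"
      "L1norm (\<lambda>x. convT a (tensor_mult convT (fejer_diagonal N)) x - a x) < \<epsilon>"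
      using N[OF \<open>a \<in> F\<close>] L1norm_convT_tensor_mult_fejer_diagonal[OF a] by simp_all
    show "proj_norm ZL1T L1norm (tensor_commutator convT a (fejer_diagonal N)) < \<epsilon>"
      using proj_norm_tensor_commutator_fejer_diagonal[OF a, of N] \<open>\<epsilon> > 0\<close> by linarith
  qed
qed

end
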